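(* Let $f(y)=\sum_{k\ge0}\frac{(-y/16)^k}{(k!)^2}$ (so $f(y)=J_0(\tfrac12\sqrt{y})$ for $y\ge0$ and $f(-y^2)=I_0(\tfrac12 y)$). Define, for $(R,u)\in\mathbb{R}^2$ and $s\in\mathbb{R}$, the function $$\chi^\sharp(R,u-s)=\tfrac12\,\mathrm{sgn}(R)\,e^{R/2}f(|u-s|^2-R^2)\mathbf{1}_{|u-s|<|R|}$$ and the measure (for fixed $R$, a measure in $u-s$) $$\chi^\flat(R,u-s)=\tfrac12e^{R/2}(\delta_{u-s=R}+\delta_{u-s=-R})-\tfrac12e^{R/2}\Big(\tfrac12f((u-s)^2-R^2)+2Rf'((u-s)^2-R^2)\Big)\mathbf{1}_{|u-s|<|R|}.$$ Then, in the sense of distributions for $(R,u)\in\mathbb{R}^2$, $\chi^\sharp$ solves $\chi^\sharp_{RR}-\chi^\sharp_{uu}-\chi^\sharp_R=0$ with $\lim_{R\to0}\chi^\sharp(R,\cdot)=0$ and $\lim_{R\to0}\chi^\sharp_R(R,\cdot)=\delta_{u=s}$, and $\chi^\flat$ solves $\chi^\flat_{RR}-\chi^\flat_{uu}-\chi^\flat_R=0$ with $\lim_{R\to0}\chi^\flat(R,\cdot)=\delta_{u=s}$ and $\lim_{R\to0}\chi^\flat_R(R,\cdot)=0$. Moreover $\lim_{R\to-\infty}\chi^\sharp(R,\cdot)=\lim_{R\to-\infty}\chi^\flat(R,\cdot)=0$, and $\chi^\flat(R,u-s)=\chi^\sharp_R(R,u-s)-\chi^\sharp(R,u-s)$.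
   Context: $J_0$ and $I_0$ denote the Bessel and modified Bessel functions of the first kind of order $0$; $\mathbf{1}$ denotes an indicator function. The equation $\eta_{RR}-\eta_{uu}-\eta_R=0$ is the entropy equation $\eta_{\rho\rho}-\rho^{-2}\eta_{uu}=0$ of isothermal gas dynamics ($p(\rho)=\rho$) written in the variable $R=\log\rho$. *)

theory Defs
  imports "HOL-Analysis.Analysis"
begin

definition f_ser :: "real \<Rightarrow> real" where
  "f_ser y = (\<Sum>k. (- y / 16) ^ k / (fact k)^2)"

definition chi_sharp :: "real \<Rightarrow> real \<Rightarrow> real" where
  "chi_sharp R v = (1/2) * sgn R * exp (R/2) * f_ser (v^2 - R^2)
                     * (if \<bar>v\<bar> < \<bar>R\<bar> then 1 else 0)"

definition sharp_pair :: "real \<Rightarrow> real \<Rightarrow> (real \<Rightarrow> real) \<Rightarrow> real" where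
  "sharp_pair s R \<phi> = integral UNIV (\<lambda>u. chi_sharp R (u - s) * \<phi> u)"

text \<open>Pairing of the measure chi-flat(R, . - s) with a function phi of u
  (the absolutely continuous part carries a factor sgn R).\<close>
definition flat_pair :: "real \<Rightarrow> real \<Rightarrow> (real \<Rightarrow> real) \<Rightarrow> real" where
  "flat_pair s R \<phi> =
     (1/2) * exp (R/2) * (\<phi> (s + R) + \<phi> (s - R))
     - (1/2) * sgn R * exp (R/2) *
       integral UNIV (\<lambda>u. (if \<bar>u - s\<bar> < \<bar>R\<bar>
            then ((1/2) * f_ser ((u - s)^2 - R^2) + 2 * R * deriv f_ser ((u - s)^2 - R^2)) * \<phi> u
            else 0))"

definition test1 :: "(real \<Rightarrow> real) \<Rightarrow> bool" where
  "test1 \<phi> \<longleftrightarrow> (\<forall>n x. ((deriv ^^ n) \<phi>) differentiable (at x))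
                 \<and> (\<exists>K. \<forall>x. K < \<bar>x\<bar> \<longrightarrow> \<phi> x = 0)"

definition pR :: "(real \<Rightarrow> real \<Rightarrow> real) \<Rightarrow> real \<Rightarrow> real \<Rightarrow> real" where
  "pR g = (\<lambda>R u. deriv (\<lambda>r. g r u) R)"

definition pu :: "(real \<Rightarrow> real \<Rightarrow> real) \<Rightarrow> real \<Rightarrow> real \<Rightarrow> real" where
  "pu g = (\<lambda>R u. deriv (\<lambda>v. g R v) u)"

inductive_set partials :: "(real \<Rightarrow> real \<Rightarrow> real) \<Rightarrow> (real \<Rightarrow> real \<Rightarrow> real) set"
  for \<psi> where
  base: "\<psi> \<in> partials \<psi>"
| dR: "g \<in> partials \<psi> \<Longrightarrow> pR g \<in> partials \<psi>"
| du: "g \<in> partials \<psi> \<Longrightarrow> pu g \<in> partials \<psi>"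

definition test2 :: "(real \<Rightarrow> real \<Rightarrow> real) \<Rightarrow> bool" where
  "test2 \<psi> \<longleftrightarrow>
     (\<forall>g \<in> partials \<psi>. continuous_on UNIV (\<lambda>(R, u). g R u)
        \<and> (\<forall>R u. (\<lambda>r. g r u) differentiable (at R) \<and> (\<lambda>v. g R v) differentiable (at u)))
     \<and> (\<exists>K. \<forall>R u. K < \<bar>R\<bar> \<or> K < \<bar>u\<bar> \<longrightarrow> \<psi> R u = 0)"

text \<open>Formal adjoint of L = d_RR - d_uu - d_R.\<close>
definition Lstar :: "(real \<Rightarrow> real \<Rightarrow> real) \<Rightarrow> real \<Rightarrow> real \<Rightarrow> real" where
  "Lstar \<psi> = (\<lambda>R u. pR (pR \<psi>) R u - pu (pu \<psi>) R u + pR \<psi> R u)"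

end

theory Submission
  imports Defs
begin

text \<open>Substituting \<open>u = s + R t\<close> turns the pairing of \<open>\<chi>\<^sup>\<sharp>(R, \<cdot> - s)\<close> or
  \<open>\<chi>\<^sup>\<flat>(R, \<cdot> - s)\<close> with a function \<open>g(R, \<cdot>)\<close> into an integral over the fixed interval
  \<open>[-1, 1]\<close> against a kernel built from \<open>f(R\<^sup>2(t\<^sup>2 - 1))\<close>, plus (for \<open>\<chi>\<^sup>\<flat>\<close>) the
  boundary term \<open>e\<^sup>R\<^sup>/\<^sup>2 (g(R, s + R) + g(R, s - R)) / 2\<close>. Differentiating under the integral
  sign, integrating by parts in \<open>t\<close> and using Bessel's equation \<open>y f'' + f' + f/16 = 0\<close> gives
  \<open>\<partial>\<^sub>R\<langle>\<chi>\<^sup>\<sharp>, g\<rangle> = \<langle>\<chi>\<^sup>\<sharp>, g\<^sub>R\<rangle> + \<langle>\<chi>\<^sup>\<flat>, g\<rangle> + \<langle>\<chi>\<^sup>\<sharp>, g\<rangle>\<close> and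
  \<open>\<partial>\<^sub>R\<langle>\<chi>\<^sup>\<flat>, g\<rangle> = \<langle>\<chi>\<^sup>\<flat>, g\<^sub>R\<rangle> + \<langle>\<chi>\<^sup>\<sharp>, g\<^sub>u\<^sub>u\<rangle>\<close>.
  For \<open>g\<close> independent of \<open>R\<close> these are \<open>\<chi>\<^sup>\<flat> = \<chi>\<^sup>\<sharp>\<^sub>R - \<chi>\<^sup>\<sharp>\<close> and \<open>\<chi>\<^sup>\<flat>\<^sub>R = \<chi>\<^sup>\<sharp>\<^sub>u\<^sub>u\<close>;
  the initial values follow by continuity at \<open>R = 0\<close>, where only the boundary term survives.
  For a test function \<open>\<psi>\<close> they show that \<open>\<langle>\<chi>\<^sup>\<sharp>, L\<^sup>*\<psi>\<rangle>\<close> is the \<open>R\<close>-derivative of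
  \<open>\<langle>\<chi>\<^sup>\<sharp>, \<psi>\<^sub>R\<rangle> - \<langle>\<chi>\<^sup>\<flat>, \<psi>\<rangle>\<close>, a function of compact support, so its integral
  vanishes (Fubini turns this into the statement on the plane); the equation for \<open>\<chi>\<^sup>\<flat>\<close>
  follows from the one for \<open>\<chi>\<^sup>\<sharp>\<close> tested against \<open>\<psi>\<close> and \<open>\<psi>\<^sub>R\<close>. The decay as
  \<open>R \<rightarrow> -\<infinity>\<close> holds because \<open>f(-4T\<^sup>2) = I\<^sub>0(T)\<close> grows more slowly than \<open>e\<^sup>T\<close>.\<close>

section \<open>The power series \<open>f\<close>\<close>

definition f_coeff :: "nat \<Rightarrow> real" where
  "f_coeff k = (-1/16)^k / (fact k)^2"

definition f_deriv :: "nat \<Rightarrow> real \<Rightarrow> real" where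
  "f_deriv n y = (\<Sum>k. (diffs ^^ n) f_coeff k * y^k)"

lemma f_ser_term_eq: "(- y / 16) ^ k / (fact k)^2 = f_coeff k * y^k"
proof -
  have "(- y / 16) ^ k = (-1/16)^k * y^k"
    by (simp flip: power_mult_distrib)
  then show ?thesis by (simp add: f_coeff_def)
qed

lemma f_deriv_0: "f_deriv 0 = f_ser"
  unfolding fun_eq_iff f_deriv_def f_ser_def f_ser_term_eq by simp

lemma summable_f_coeff_diffs: "summable (\<lambda>k. (diffs ^^ n) f_coeff k * y^k)"
proof (induction n arbitrary: y)
  case 0
  have "norm (f_coeff k * y^k) \<le> inverse (fact k) * norm y ^ k" for k
  proof -
    have "(1::real) \<le> fact k" by simp
    then have "fact k \<le> (fact k :: real)^2" by (simp add: power2_eq_square)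
    have "\<bar>f_coeff k\<bar> = (1/16)^k / (fact k)^2" by (simp add: f_coeff_def power_abs)
    also have "\<dots> \<le> 1 / (fact k)^2"
      by (intro divide_right_mono) (auto simp: power_le_one)
    also have "\<dots> \<le> 1 / fact k"
      using \<open>fact k \<le> (fact k)^2\<close> by (intro divide_left_mono) auto
    finally show ?thesis by (simp add: abs_mult power_abs divide_inverse mult_right_mono)
  qed
  then show ?case
    by (intro summable_comparison_test[OF _ summable_exp[of "norm y"]]) auto
next
  case (Suc n)
  then show ?case by (simp add: termdiff_converges_all)
qed

lemma f_deriv_has_real_derivative: "(f_deriv n has_real_derivative f_deriv (Suc n) y) (at y)"
  unfolding f_deriv_def[abs_def] funpow.simps(2) o_def
  by (rule termdiffs_strong_converges_everywhere[OF summable_f_coeff_diffs])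

lemma deriv_f_ser: "deriv f_ser = f_deriv 1"
  using f_deriv_has_real_derivative[of 0] DERIV_imp_deriv by (auto simp: fun_eq_iff f_deriv_0)

lemma continuous_on_f_deriv [continuous_intros]:
  "continuous_on S h \<Longrightarrow> continuous_on S (\<lambda>x. f_deriv n (h x))"
  by (rule continuous_on_compose2[of UNIV, OF _ _ subset_UNIV])
     (auto intro!: continuous_at_imp_continuous_on DERIV_isCont f_deriv_has_real_derivative)

lemma continuous_on_f_ser [continuous_intros]:
  "continuous_on S h \<Longrightarrow> continuous_on S (\<lambda>x. f_ser (h x))"
  using continuous_on_f_deriv[of S h 0] by (simp add: f_deriv_0)

lemma f_deriv_chain [derivative_intros]:
  "(h has_real_derivative h') (at x within S) \<Longrightarrow>
    ((\<lambda>x. f_deriv n (h x)) has_real_derivative f_deriv (Suc n) (h x) * h') (at x within S)"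
  using DERIV_chain'[OF _ f_deriv_has_real_derivative] by (simp add: mult.commute)

lemma f_ser_chain [derivative_intros]:
  "(h has_real_derivative h') (at x within S) \<Longrightarrow>
    ((\<lambda>x. f_ser (h x)) has_real_derivative f_deriv 1 (h x) * h') (at x within S)"
  using f_deriv_chain[of h h' x S 0] by (simp add: f_deriv_0)

lemma f_ser_0: "f_ser 0 = 1"
  using powser_zero[of "f_coeff"] by (simp add: f_deriv_def f_coeff_def flip: f_deriv_0)

lemma f_coeff_Suc: "f_coeff (Suc n) = - f_coeff n / (16 * (real (Suc n))^2)"
  by (simp add: f_coeff_def power_mult_distrib)

text \<open>Bessel's equation of order \<open>0\<close>, written for \<open>f(y) = J\<^sub>0(\<surd>y / 2)\<close>.\<close>
lemma f_ser_ode: "y * f_deriv 2 y + f_deriv 1 y + f_ser y / 16 = 0"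
proof -
  define h where "h n = real n * diffs f_coeff n * y^n" for n
  have "y * ((diffs ^^ 2) f_coeff n * y^n) = h (Suc n)" for n
    by (simp add: h_def numeral_2_eq_2 diffs_def)
  then have "(\<lambda>n. h (Suc n)) sums (y * f_deriv 2 y)"
    using sums_mult[OF summable_sums[OF summable_f_coeff_diffs[of 2 y]], of y]
    unfolding f_deriv_def by simp
  then have "h sums (y * f_deriv 2 y + h 0)"
    by (simp only: sums_Suc_iff)
  then have "h sums (y * f_deriv 2 y)"
    by (simp add: h_def)
  moreover have "(\<lambda>n. diffs f_coeff n * y^n) sums f_deriv 1 y"
    using summable_sums[OF summable_f_coeff_diffs[of 1 y]] by (simp add: f_deriv_def)
  moreover have "(\<lambda>n. f_coeff n * y^n / 16) sums (f_ser y / 16)"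
    using sums_divide[OF summable_sums[OF summable_f_coeff_diffs[of 0 y]], of 16]
    by (simp add: f_deriv_def flip: f_deriv_0)
  ultimately have "(\<lambda>n. h n + diffs f_coeff n * y^n + f_coeff n * y^n / 16) sums
      (y * f_deriv 2 y + f_deriv 1 y + f_ser y / 16)"
    by (intro sums_add)
  moreover have "h n + diffs f_coeff n * y^n + f_coeff n * y^n / 16 = 0" for n
  proof -
    have "(real n + 1) * diffs f_coeff n = (real (Suc n))^2 * f_coeff (Suc n)"
      by (simp add: diffs_def power2_eq_square)
    also have "\<dots> = - f_coeff n / 16"
      unfolding f_coeff_Suc by (simp add: field_simps)
    finally have "(real n + 1) * diffs f_coeff n + f_coeff n / 16 = 0" by simp
    moreover have "h n + diffs f_coeff n * y^n + f_coeff n * y^n / 16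
        = y^n * ((real n + 1) * diffs f_coeff n + f_coeff n / 16)"
      by (simp add: h_def algebra_simps)
    ultimately show ?thesis by simp
  qed
  ultimately have "(\<lambda>n. 0) sums (y * f_deriv 2 y + f_deriv 1 y + f_ser y / 16)"
    by simp
  then show ?thesis using sums_unique2[OF sums_zero] by simp
qed

lemma f_ser_sums: "(\<lambda>k. (- y / 16) ^ k / (fact k)^2) sums f_ser y"
  unfolding f_ser_def f_ser_term_eq using summable_sums[OF summable_f_coeff_diffs[of 0 y]] by simp

lemma f_deriv_1_sums:
  "(\<lambda>k. (real k + 1) * (- y / 16) ^ k / (16 * (fact (Suc k))^2)) sums (- f_deriv 1 y)"
proof -
  have "diffs f_coeff k * y^k = - ((real k + 1) * (- y / 16) ^ k / (16 * (fact (Suc k))^2))" for k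
  proof -
    have "(- y / 16) ^ k = (-1/16)^k * y^k" by (simp flip: power_mult_distrib)
    then show ?thesis by (simp add: diffs_def f_coeff_def field_simps)
  qed
  then show ?thesis
    using sums_minus[OF summable_sums[OF summable_f_coeff_diffs[of 1 y]]] by (simp add: f_deriv_def)
qed

lemma f_ser_nonpos_bounds:
  assumes "y' \<le> y" "y \<le> 0"
  shows "0 \<le> f_ser y" "f_ser y \<le> f_ser y'" "f_deriv 1 y \<le> 0" "\<bar>f_deriv 1 y\<bar> \<le> \<bar>f_deriv 1 y'\<bar>"
proof -
  have "0 \<le> (- y / 16) ^ k / (fact k)^2" for k using assms by simp
  then show "0 \<le> f_ser y" using sums_le[OF _ sums_zero f_ser_sums] by blast
  have "(- y / 16) ^ k / (fact k)^2 \<le> (- y' / 16) ^ k / (fact k)^2" for k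
    using assms by (intro divide_right_mono power_mono) auto
  then show "f_ser y \<le> f_ser y'" using sums_le[OF _ f_ser_sums f_ser_sums] by blast
  have nonneg: "0 \<le> (real k + 1) * (- x / 16) ^ k / (16 * (fact (Suc k))^2)" if "x \<le> 0" for k x
    using that by simp
  have "0 \<le> - f_deriv 1 x" if "x \<le> 0" for x
    using sums_le[OF _ sums_zero f_deriv_1_sums] nonneg[OF that] by blast
  then have "f_deriv 1 y \<le> 0" "f_deriv 1 y' \<le> 0" using assms by auto
  then show "f_deriv 1 y \<le> 0" by simp
  have "(real k + 1) * (- y / 16) ^ k / (16 * (fact (Suc k))^2)
      \<le> (real k + 1) * (- y' / 16) ^ k / (16 * (fact (Suc k))^2)" for k
    using assms by (intro divide_right_mono mult_left_mono power_mono) auto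
  then have "- f_deriv 1 y \<le> - f_deriv 1 y'" using sums_le[OF _ f_deriv_1_sums f_deriv_1_sums] by blast
  with \<open>f_deriv 1 y \<le> 0\<close> \<open>f_deriv 1 y' \<le> 0\<close> show "\<bar>f_deriv 1 y\<bar> \<le> \<bar>f_deriv 1 y'\<bar>" by linarith
qed

lemma f_ser_borel_measurable [measurable]: "f_ser \<in> borel_measurable borel"
  using continuous_on_f_ser[OF continuous_on_id] by (intro borel_measurable_continuous_onI) simp

section \<open>Growth of \<open>f\<close> on the negative axis\<close>

lemma sum_powfact_le_exp:
  fixes m :: "nat \<Rightarrow> nat" and t :: real
  assumes "inj m" "0 \<le> t"
  shows "(\<Sum>k<n. t^(m k) / fact (m k)) \<le> exp t"
proof -
  have "(\<Sum>k<n. t^(m k) / fact (m k)) = (\<Sum>j\<in>m ` {..<n}. t^j / fact j)"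
    using assms(1) by (subst sum.reindex) (auto intro: inj_on_subset)
  also have "\<dots> \<le> (\<Sum>j. t^j / fact j)"
    using assms summable_exp[of t] by (intro sum_le_suminf) (auto simp: divide_inverse mult.commute)
  also have "\<dots> = exp t" by (simp add: exp_def divide_inverse mult.commute scaleR_conv_of_real)
  finally show ?thesis .
qed

lemma exp_subseries_le:
  fixes b :: "nat \<Rightarrow> real" and m :: "nat \<Rightarrow> nat"
  assumes m: "inj m" and t: "0 \<le> t" and b: "\<And>k. 0 \<le> b k" and small: "\<And>k. k \<ge> N \<Longrightarrow> b k \<le> e"
    and S: "(\<lambda>k. b k * (t^(m k) / fact (m k))) sums S"
  shows "S \<le> (\<Sum>k<N. b k * (t^(m k) / fact (m k))) + e * exp t"
proof -
  define x where "x k = t^(m k) / fact (m k)" for k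
  have x0: "0 \<le> x k" for k using t by (simp add: x_def)
  have e: "0 \<le> e" using small[of N] b[of N] by simp
  have "(\<Sum>k<n. b k * x k) \<le> (\<Sum>k<N. b k * x k) + e * exp t" for n
  proof -
    have "b k * x k \<le> (if k < N then b k * x k else 0) + e * x k" for k
      using small[of k] x0[of k] b[of k] e by (cases "k < N") (auto intro: mult_right_mono)
    then have "(\<Sum>k<n. b k * x k) \<le> (\<Sum>k<n. (if k < N then b k * x k else 0) + e * x k)"
      by (intro sum_mono)
    also have "\<dots> = (\<Sum>k<n. (if k < N then b k * x k else 0)) + e * (\<Sum>k<n. x k)"
      by (simp add: sum.distrib sum_distrib_left)
    also have "(\<Sum>k<n. (if k < N then b k * x k else 0)) \<le> (\<Sum>k<N. b k * x k)"
      using b x0 by (simp add: sum.If_cases) (intro sum_mono2, auto)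
    also have "e * (\<Sum>k<n. x k) \<le> e * exp t"
      using e sum_powfact_le_exp[OF m t] by (intro mult_left_mono) (auto simp: x_def)
    finally show ?thesis by simp
  qed
  then show ?thesis
    using suminf_le_const[OF sums_summable[OF S]] sums_unique[OF S] by (simp add: x_def)
qed

lemma exp_neg_mult_exp_subseries_tendsto_0:
  fixes b :: "nat \<Rightarrow> real" and m :: "nat \<Rightarrow> nat"
  assumes m: "inj m" and b0: "b \<longlonglongrightarrow> 0" and b: "\<And>k. 0 \<le> b k"
    and S: "\<And>t. 0 \<le> t \<Longrightarrow> (\<lambda>k. b k * (t^(m k) / fact (m k))) sums S t"
  shows "((\<lambda>t. exp (-t) * S t) \<longlongrightarrow> 0) at_top"
proof (rule tendstoI)
  fix e :: real assume "e > 0"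
  then have "\<forall>\<^sub>F k in sequentially. b k < e/2" using order_tendstoD(2)[OF b0, of "e/2"] by simp
  then obtain N where N: "\<And>k. k \<ge> N \<Longrightarrow> b k \<le> e/2"
    unfolding eventually_sequentially by (auto intro: less_imp_le)
  define Q where "Q t = (\<Sum>k<N. b k * (t^(m k) / fact (m k)))" for t :: real
  have "((\<lambda>t. \<Sum>k<N. b k / fact (m k) * (t^(m k) / exp t)) \<longlongrightarrow> (\<Sum>k<N. b k / fact (m k) * 0)) at_top"
    by (intro tendsto_sum tendsto_mult tendsto_const tendsto_power_div_exp_0)
  then have "((\<lambda>t. exp (-t) * Q t) \<longlongrightarrow> 0) at_top"
    by (simp add: Q_def sum_distrib_left exp_minus field_simps)
  then have "\<forall>\<^sub>F t in at_top. \<bar>exp (-t) * Q t\<bar> < e/2"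
    using \<open>e > 0\<close> by (auto dest: tendstoD[of _ 0 _ "e/2"] simp: dist_real_def)
  then show "\<forall>\<^sub>F t in at_top. dist (exp (-t) * S t) 0 < e"
    using eventually_ge_at_top[of "0::real"]
  proof eventually_elim
    case (elim t)
    have "S t \<le> Q t + e/2 * exp t"
      unfolding Q_def using exp_subseries_le[OF m elim(2) b N S[OF elim(2)]] .
    then have "exp (-t) * S t \<le> exp (-t) * Q t + e/2"
      using mult_left_mono[of _ _ "exp (-t)"] by (fastforce simp: algebra_simps exp_minus)
    moreover have "0 \<le> S t"
      using sums_le[OF _ sums_zero S[OF elim(2)]] b elim(2) by simp
    ultimately show ?case using elim(1) by (simp add: dist_real_def)
  qed
qed

fun central_binomial_ratio :: "nat \<Rightarrow> real" where
  "central_binomial_ratio 0 = 1"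
| "central_binomial_ratio (Suc k) = central_binomial_ratio k * (2*k+1) / (2*k+2)"

lemma central_binomial_ratio_eq: "central_binomial_ratio k = fact (2*k) / (4^k * (fact k)^2)"
proof -
  have "central_binomial_ratio k * 4^k * (fact k)^2 = fact (2*k)"
  proof (induction k)
    case (Suc k)
    have fact2: "fact (2 * Suc k) = (real (2*k+2) * real (2*k+1)) * (fact (2*k) :: real)"
      by (simp add: algebra_simps)
    have "central_binomial_ratio (Suc k) * 4^(Suc k) * (fact (Suc k))^2
        = (central_binomial_ratio k * 4^k * (fact k)^2) * ((2*k+1) / (2*k+2) * 4 * (real k+1)^2)"
      by (simp add: power_mult_distrib power2_eq_square algebra_simps)
    also have "(2*k+1) / (2*k+2) * 4 * (real k+1)^2 = real (2*k+2) * real (2*k+1)"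
      by (simp add: field_simps power2_eq_square)
    finally show ?case unfolding fact2 Suc by simp
  qed simp
  then show ?thesis by (simp add: field_simps)
qed

lemma central_binomial_ratio_nonneg: "0 \<le> central_binomial_ratio k"
  by (induction k) auto

lemma central_binomial_ratio_sq_le: "(central_binomial_ratio k)^2 \<le> 1 / (real k + 1)"
proof (induction k)
  case (Suc k)
  define D :: real where "D = (real k + 1) * (2*k+2)^2"
  have "0 < D" by (simp add: D_def)
  have "(2*k+1)^2 * (real k + 2) \<le> D"
    by (simp add: D_def power2_eq_square algebra_simps)
  then have "(2*k+1)^2 / D \<le> 1 / (real k + 2)"
    using \<open>0 < D\<close> by (simp add: field_simps)
  moreover have "(central_binomial_ratio (Suc k))^2 = (central_binomial_ratio k)^2 * ((2*k+1)^2 / (2*k+2)^2)"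
    by (simp add: power_mult_distrib power_divide)
  moreover have "1 / (real k + 1) * ((2*k+1)^2 / (2*k+2)^2) = (2*k+1)^2 / D"
    by (simp add: D_def)
  ultimately show ?case
    using mult_right_mono[OF Suc, of "(2*k+1)^2 / (2*k+2)^2"] by (simp add: add.commute)
qed simp

lemma central_binomial_ratio_tendsto_0: "central_binomial_ratio \<longlonglongrightarrow> 0"
proof (rule tendsto_sandwich[of "\<lambda>_. 0" _ _ "\<lambda>k. sqrt (inverse (real (Suc k)))"])
  show "\<forall>\<^sub>F k in sequentially. central_binomial_ratio k \<le> sqrt (inverse (real (Suc k)))"
    using central_binomial_ratio_sq_le
    by (intro always_eventually allI real_le_rsqrt) (simp add: divide_inverse add.commute)
  show "(\<lambda>k. sqrt (inverse (real (Suc k)))) \<longlonglongrightarrow> 0"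
    using tendsto_real_sqrt[OF LIMSEQ_inverse_real_of_nat] by simp
qed (simp_all add: central_binomial_ratio_nonneg)

text \<open>On the negative axis \<open>f(-4T\<^sup>2) = I\<^sub>0(T) = \<Sum>\<^sub>k c\<^sub>k T\<^sup>2\<^sup>k / (2k)!\<close> with
  \<open>c\<^sub>k = (2k choose k) / 4\<^sup>k \<longrightarrow> 0\<close>, so it grows more slowly than \<open>e\<^sup>T\<close>.\<close>
lemma exp_neg_f_ser_tendsto_0: "((\<lambda>T. exp (-T) * f_ser (-4*T^2)) \<longlongrightarrow> 0) at_top"
proof (rule exp_neg_mult_exp_subseries_tendsto_0[where m = "\<lambda>k. 2*k"])
  show "inj (\<lambda>k::nat. 2*k)" by (auto simp: inj_def)
  fix T :: real
  have "(- (-4*T^2) / 16) ^ k / (fact k)^2 = central_binomial_ratio k * (T^(2*k) / fact (2*k))" for k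
    by (simp add: central_binomial_ratio_eq power_divide power_mult[symmetric] field_simps)
  then show "(\<lambda>k. central_binomial_ratio k * (T^(2*k) / fact (2*k))) sums f_ser (-4*T^2)"
    using f_ser_sums[of "-4*T^2"] by simp
qed (simp_all add: central_binomial_ratio_tendsto_0 central_binomial_ratio_nonneg)

lemma exp_neg_f_deriv_1_tendsto_0:
  "((\<lambda>T. exp (-T) * (T * \<bar>f_deriv 1 (-4*T^2)\<bar>)) \<longlongrightarrow> 0) at_top"
proof -
  have "((\<lambda>T. exp (-T) * (T * - f_deriv 1 (-4*T^2))) \<longlongrightarrow> 0) at_top"
  proof (rule exp_neg_mult_exp_subseries_tendsto_0[where m = "\<lambda>k. 2*k+1" and b = "\<lambda>k. central_binomial_ratio (Suc k) / 8"])
    show "inj (\<lambda>k::nat. 2*k+1)" by (auto simp: inj_def)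
    show "(\<lambda>k. central_binomial_ratio (Suc k) / 8) \<longlonglongrightarrow> 0"
      using tendsto_divide[OF LIMSEQ_Suc[OF central_binomial_ratio_tendsto_0] tendsto_const[of 8]] by simp
    fix T :: real
    have "T * ((real k + 1) * (- (-4*T^2) / 16) ^ k / (16 * (fact (Suc k))^2))
        = central_binomial_ratio (Suc k) / 8 * (T^(2*k+1) / fact (2*k+1))" for k
    proof -
      have "fact (2 * Suc k) = (2*k+2) * (fact (2*k+1) :: real)"
        using fact_Suc[of "Suc (2*k)", where 'a=real] by (simp del: fact_Suc add: algebra_simps)
      then have c: "central_binomial_ratio (Suc k) = (2*k+2) * fact (2*k+1) / (4 * 4^k * (fact (Suc k))^2)"
        by (simp del: fact_Suc central_binomial_ratio.simps add: central_binomial_ratio_eq algebra_simps)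
      have p: "(- (-4*T^2) / 16) ^ k = T^(2*k) / 4^k"
        by (simp add: power_divide power_mult)
      show ?thesis unfolding c p by (simp del: fact_Suc add: field_simps)
    qed
    then show "(\<lambda>k. central_binomial_ratio (Suc k) / 8 * (T^(2*k+1) / fact (2*k+1))) sums (T * - f_deriv 1 (-4*T^2))"
      using sums_mult[OF f_deriv_1_sums, of T "-4*T^2"] by simp
  qed (simp add: central_binomial_ratio_nonneg)
  moreover have "f_deriv 1 (-4*T^2) \<le> 0" for T
    using f_ser_nonpos_bounds(3)[of "-4*T^2"] by simp
  ultimately show ?thesis by simp
qed

lemma filterlim_half_at_top: "filterlim (\<lambda>x::real. x/2) at_top at_top"
  using filterlim_tendsto_pos_mult_at_top[OF tendsto_const _ filterlim_ident, of "1/2"] by simp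

lemma exp_half_f_ser_tendsto_0_at_bot: "((\<lambda>R. exp (R/2) * f_ser (-(R^2))) \<longlongrightarrow> 0) at_bot"
  using filterlim_compose[OF exp_neg_f_ser_tendsto_0 filterlim_half_at_top]
  by (simp add: filterlim_at_bot_mirror o_def power_divide)

lemma exp_half_f_deriv_1_tendsto_0_at_bot:
  "((\<lambda>R. exp (R/2) * (\<bar>R\<bar> * \<bar>f_deriv 1 (-(R^2))\<bar>)) \<longlongrightarrow> 0) at_bot"
proof -
  have "((\<lambda>x. 2 * (exp (-(x/2)) * ((x/2) * \<bar>f_deriv 1 (-4*(x/2)^2)\<bar>))) \<longlongrightarrow> 0) at_top"
    using tendsto_mult_left[OF filterlim_compose[OF exp_neg_f_deriv_1_tendsto_0 filterlim_half_at_top], of 2]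
    by (simp add: o_def)
  then have "((\<lambda>x. exp ((-x)/2) * (\<bar>-x\<bar> * \<bar>f_deriv 1 (-((-x)^2))\<bar>)) \<longlongrightarrow> 0) at_top"
    by (rule Lim_transform_eventually)
       (use eventually_ge_at_top[of "0::real"] in \<open>eventually_elim, simp add: power_divide\<close>)
  then show ?thesis unfolding filterlim_at_bot_mirror by simp
qed

section \<open>Partial derivatives\<close>

definition partial_C1 :: "(real \<Rightarrow> real \<Rightarrow> real) \<Rightarrow> bool" where
  "partial_C1 g \<longleftrightarrow> (\<forall>R u. (\<lambda>r. g r u) differentiable (at R) \<and> (\<lambda>v. g R v) differentiable (at u))
     \<and> continuous_on UNIV (\<lambda>(R, u). g R u) \<and> continuous_on UNIV (\<lambda>(R, u). pR g R u)
     \<and> continuous_on UNIV (\<lambda>(R, u). pu g R u)"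

lemma partial_C1D:
  assumes "partial_C1 g"
  shows "\<And>R u. (\<lambda>r. g r u) differentiable (at R)" "\<And>R u. (\<lambda>v. g R v) differentiable (at u)"
    "continuous_on UNIV (\<lambda>(R, u). g R u)" "continuous_on UNIV (\<lambda>(R, u). pR g R u)"
    "continuous_on UNIV (\<lambda>(R, u). pu g R u)"
  using assms unfolding partial_C1_def by auto

lemma pR_has_real_derivative:
  "(\<lambda>r. g r u) differentiable (at R) \<Longrightarrow> ((\<lambda>r. g r u) has_real_derivative pR g R u) (at R)"
  unfolding pR_def by (simp add: DERIV_deriv_iff_real_differentiable)

lemma pu_has_real_derivative:
  "(\<lambda>v. g R v) differentiable (at u) \<Longrightarrow> ((\<lambda>v. g R v) has_real_derivative pu g R u) (at u)"
  unfolding pu_def by (simp add: DERIV_deriv_iff_real_differentiable)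

lemma pR_const: "pR (\<lambda>_. h) = (\<lambda>_ _. 0)"
  by (simp add: pR_def fun_eq_iff)

lemma pu_const: "pu (\<lambda>_. h) = (\<lambda>_. deriv h)"
  by (simp add: pu_def fun_eq_iff)

lemma continuous_on_compose_uncurry:
  assumes "continuous_on UNIV (\<lambda>(x, y). g x y)" "continuous_on S a" "continuous_on S b"
  shows "continuous_on S (\<lambda>z. g (a z) (b z))"
  using continuous_on_compose2[OF assms(1) continuous_on_Pair[OF assms(2,3)]] by simp

lemma has_real_derivative_along_line:
  fixes g :: "real \<Rightarrow> real \<Rightarrow> real"
  assumes dR: "\<And>R u. (\<lambda>r. g r u) differentiable (at R)"
    and du: "\<And>R u. (\<lambda>v. g R v) differentiable (at u)"
    and c: "continuous_on UNIV (\<lambda>(R, u). pR g R u)"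
  shows "((\<lambda>R. g R (a + b*R)) has_real_derivative pR g R0 (a + b*R0) + b * pu g R0 (a + b*R0)) (at R0)"
proof -
  define u0 where "u0 = a + b*R0"
  have "((\<lambda>(u, R). g R u) has_derivative
      (\<lambda>(x, y). pu g R0 u0 * x + blinfun_apply (blinfun_mult_right (pR g R0 u0)) y)) (at (u0, R0) within UNIV \<times> UNIV)"
  proof (rule has_derivative_partialsI)
    show "((\<lambda>u. g R0 u) has_derivative (*) (pu g R0 u0)) (at u0 within UNIV)"
      using pu_has_real_derivative[OF du] by (simp add: has_field_derivative_def)
    show "((\<lambda>R. g R u) has_derivative blinfun_apply (blinfun_mult_right (pR g R u))) (at R within UNIV)" for u R
      using pR_has_real_derivative[OF dR] by (simp add: has_field_derivative_def)
    have "continuous_on UNIV (\<lambda>p. pR g (snd p) (fst p))"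
      by (intro continuous_on_compose_uncurry[OF c] continuous_intros)
    then show "continuous (at (u0, R0) within UNIV \<times> UNIV) (\<lambda>(u, R). blinfun_mult_right (pR g R u))"
      by (auto intro!: continuous_intros simp: split_beta' continuous_on_eq_continuous_within)
  qed auto
  then have D: "((\<lambda>(u, R). g R u) has_derivative (\<lambda>(x, y). pu g R0 u0 * x + pR g R0 u0 * y))
      (at (a + b*R0, R0))"
    by (simp add: u0_def)
  have L: "((\<lambda>R. (a + b*R, R)) has_derivative (\<lambda>h. (b*h, h))) (at R0)"
    by (auto intro!: derivative_eq_intros)
  from has_derivative_compose[OF L D]
  have "((\<lambda>R. g R (a + b*R)) has_derivative (\<lambda>h. pu g R0 u0 * (b*h) + pR g R0 u0 * h)) (at R0)"
    by simp
  then show ?thesis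
    unfolding has_field_derivative_def u0_def
    by (rule has_derivative_eq_rhs) (auto simp: fun_eq_iff algebra_simps)
qed

lemma second_difference_mvt:
  fixes g :: "real \<Rightarrow> real \<Rightarrow> real"
  assumes dR: "\<And>x y. (\<lambda>r. g r y) differentiable (at x)"
    and dRu: "\<And>x y. (\<lambda>v. pR g x v) differentiable (at y)" and h: "0 < h"
  obtains \<xi> \<eta> where "x < \<xi>" "\<xi> < x + h" "y < \<eta>" "\<eta> < y + h"
    "g (x + h) (y + h) - g (x + h) y - g x (y + h) + g x y = h^2 * pu (pR g) \<xi> \<eta>"
proof -
  have "((\<lambda>r. g r (y + h) - g r y) has_real_derivative pR g r (y + h) - pR g r y) (at r)" for r
    by (intro derivative_intros pR_has_real_derivative dR)
  from MVT2[of x "x + h" _ "\<lambda>r. pR g r (y + h) - pR g r y", OF _ this] h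
  obtain \<xi> where \<xi>: "x < \<xi>" "\<xi> < x + h"
    and e1: "g (x + h) (y + h) - g (x + h) y - (g x (y + h) - g x y) = h * (pR g \<xi> (y + h) - pR g \<xi> y)"
    by auto
  from MVT2[of y "y + h" "\<lambda>v. pR g \<xi> v" "pu (pR g) \<xi>", OF _ pu_has_real_derivative[OF dRu]] h
  obtain \<eta> where "y < \<eta>" "\<eta> < y + h" and "pR g \<xi> (y + h) - pR g \<xi> y = h * pu (pR g) \<xi> \<eta>"
    by auto
  with \<xi> e1 show ?thesis by (intro that[of \<xi> \<eta>]) (simp_all add: power2_eq_square)
qed

lemma mixed_partials_meet_near:
  fixes g :: "real \<Rightarrow> real \<Rightarrow> real"
  assumes dR: "\<And>x y. (\<lambda>r. g r y) differentiable (at x)"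
    and du: "\<And>x y. (\<lambda>v. g x v) differentiable (at y)"
    and dRu: "\<And>x y. (\<lambda>v. pR g x v) differentiable (at y)"
    and duR: "\<And>x y. (\<lambda>r. pu g r y) differentiable (at x)" and h: "0 < h"
  obtains p q where "p \<in> ball (x, y) (2 * h)" "q \<in> ball (x, y) (2 * h)"
    "pu (pR g) (fst p) (snd p) = pR (pu g) (fst q) (snd q)"
proof -
  have duR': "(\<lambda>v. pR (\<lambda>a b. g b a) a v) differentiable (at b)" for a b
    using duR by (simp add: pR_def pu_def)
  have near: "(a, b) \<in> ball (x, y) (2 * h)" if "x < a" "a < x + h" "y < b" "b < y + h" for a b
    using that sqrt_sum_squares_le_sum_abs[of "a - x" "b - y"]
    by (simp add: dist_Pair_Pair dist_real_def dist_commute)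
  define \<Delta> where "\<Delta> = g (x + h) (y + h) - g (x + h) y - g x (y + h) + g x y"
  obtain \<xi> \<eta> where "x < \<xi>" "\<xi> < x + h" "y < \<eta>" "\<eta> < y + h" "\<Delta> = h^2 * pu (pR g) \<xi> \<eta>"
    using second_difference_mvt[OF dR dRu h] unfolding \<Delta>_def by blast
  \<comment> \<open>the same second difference, with the roles of the two variables exchanged\<close>
  moreover obtain \<eta>' \<xi>' where "y < \<eta>'" "\<eta>' < y + h" "x < \<xi>'" "\<xi>' < x + h"
    "\<Delta> = h^2 * pR (pu g) \<xi>' \<eta>'"
    using second_difference_mvt[of "\<lambda>a b. g b a" h y x, OF du duR' h]
    unfolding \<Delta>_def by (auto simp: pR_def pu_def algebra_simps)
  ultimately show ?thesis
    using near h by (intro that[of "(\<xi>, \<eta>)" "(\<xi>', \<eta>')"]) auto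
qed

lemma LIMSEQ_in_shrinking_balls:
  assumes "\<And>n. r n \<in> ball x (d n)" "d \<longlonglongrightarrow> 0"
  shows "r \<longlonglongrightarrow> x"
proof -
  have "(\<lambda>n. dist (r n) x) \<longlonglongrightarrow> 0"
    using assms(1) by (intro tendsto_sandwich[OF _ _ tendsto_const assms(2)])
      (auto simp: dist_commute less_imp_le)
  then show ?thesis by (simp only: tendsto_dist_iff[of r])
qed

lemma pu_pR_commute:
  fixes g :: "real \<Rightarrow> real \<Rightarrow> real"
  assumes dR: "\<And>x y. (\<lambda>r. g r y) differentiable (at x)"
    and du: "\<And>x y. (\<lambda>v. g x v) differentiable (at y)"
    and dRu: "\<And>x y. (\<lambda>v. pR g x v) differentiable (at y)"
    and duR: "\<And>x y. (\<lambda>r. pu g r y) differentiable (at x)"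
    and c1: "continuous_on UNIV (\<lambda>(x, y). pu (pR g) x y)"
    and c2: "continuous_on UNIV (\<lambda>(x, y). pR (pu g) x y)"
  shows "pu (pR g) x y = pR (pu g) x y"
proof -
  define d where "d n = 2 * (1 / real (Suc n))" for n
  have "\<exists>p q. p \<in> ball (x, y) (d n) \<and> q \<in> ball (x, y) (d n)
      \<and> pu (pR g) (fst p) (snd p) = pR (pu g) (fst q) (snd q)" for n
  proof -
    have "0 < 1 / real (Suc n)" by simp
    from mixed_partials_meet_near[OF dR du dRu duR this, of x y] show ?thesis unfolding d_def by blast
  qed
  then obtain p q where p: "\<And>n. p n \<in> ball (x, y) (d n)" and q: "\<And>n. q n \<in> ball (x, y) (d n)"
    and eq: "\<And>n. pu (pR g) (fst (p n)) (snd (p n)) = pR (pu g) (fst (q n)) (snd (q n))"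
    by metis
  have d: "d \<longlonglongrightarrow> 0"
    unfolding d_def using tendsto_mult_right_zero[OF LIMSEQ_inverse_real_of_nat, of 2]
    by (simp add: inverse_eq_divide)
  have "(\<lambda>n. pu (pR g) (fst (p n)) (snd (p n))) \<longlonglongrightarrow> pu (pR g) x y"
    using continuous_on_tendsto_compose[OF c1 LIMSEQ_in_shrinking_balls[OF p d]] by (simp add: split_beta')
  moreover have "(\<lambda>n. pu (pR g) (fst (p n)) (snd (p n))) \<longlonglongrightarrow> pR (pu g) x y"
    unfolding eq
    using continuous_on_tendsto_compose[OF c2 LIMSEQ_in_shrinking_balls[OF q d]] by (simp add: split_beta')
  ultimately show ?thesis by (rule LIMSEQ_unique)
qed

section \<open>Rescaled pairings\<close>

lemma has_integral_rescaled_interval: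
  fixes h :: "real \<Rightarrow> real"
  assumes h: "continuous_on UNIV h" and R: "R \<noteq> 0"
  shows "((\<lambda>u. if \<bar>u - s\<bar> < \<bar>R\<bar> then h u else 0) has_integral
           \<bar>R\<bar> * integral {-1..1} (\<lambda>t. h (s + R*t))) UNIV"
proof -
  define I where "I = integral {-1..1} (\<lambda>t. h (s + R*t))"
  have "continuous_on {-1..1} (\<lambda>t. h (s + R*t))"
    by (intro continuous_on_compose2[OF h] continuous_intros) auto
  then have "((\<lambda>t. h (s + R*t)) has_integral I) (cbox (-1) 1)"
    unfolding I_def by (simp add: integrable_integral integrable_continuous_real)
  from has_integral_affinity[OF this, of "1/R" "-s/R"] R
  have "(h has_integral \<bar>R\<bar> * I) ((\<lambda>x. R*x + s) ` {-1..1})"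
    by (simp add: field_simps)
  also have "(\<lambda>x. R*x + s) ` {-1..1} = {s - \<bar>R\<bar>..s + \<bar>R\<bar>}"
    by (simp add: image_affinity_atLeastAtMost abs_if)
  finally have "((\<lambda>u. if u \<in> {s - \<bar>R\<bar>..s + \<bar>R\<bar>} then h u else 0) has_integral \<bar>R\<bar> * I) UNIV"
    by (simp only: has_integral_restrict_UNIV)
  then show ?thesis
    unfolding I_def[symmetric]
    by (rule has_integral_spike_finite[where S = "{s - \<bar>R\<bar>, s + \<bar>R\<bar>}", rotated 2]) auto
qed

lemma integral_rescaled_interval:
  fixes \<kappa> \<phi> :: "real \<Rightarrow> real"
  assumes "continuous_on UNIV \<kappa>" "continuous_on UNIV \<phi>"
  shows "integral UNIV (\<lambda>u. if \<bar>u - s\<bar> < \<bar>R\<bar> then \<kappa> ((u - s)^2 - R^2) * \<phi> u else 0)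
       = \<bar>R\<bar> * integral {-1..1} (\<lambda>t. \<kappa> (R^2*(t^2-1)) * \<phi> (s + R*t))"
proof (cases "R = 0")
  case False
  have "continuous_on UNIV (\<lambda>u. \<kappa> ((u - s)^2 - R^2) * \<phi> u)"
    by (intro continuous_intros continuous_on_compose2[OF assms(1)] assms(2)) auto
  from integral_unique[OF has_integral_rescaled_interval[OF this False]] show ?thesis
    by (simp add: algebra_simps power2_eq_square)
qed simp

text \<open>Substituting \<open>u = s + R t\<close> turns the pairing of \<open>\<chi>\<^sup>\<sharp>(R, \<cdot> - s)\<close> (resp. \<open>\<chi>\<^sup>\<flat>\<close>) with
  \<open>g(R, \<cdot>)\<close> into \<open>sharp_rescaled s g R\<close> (resp. \<open>flat_rescaled\<close>), an integral over the fixed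
  interval \<open>[-1, 1]\<close> that can be differentiated in \<open>R\<close> under the integral sign; the Jacobian
  \<open>\<bar>R\<bar>\<close> and the factor \<open>sgn R\<close> combine to \<open>R\<close>.\<close>
definition sharp_kernel :: "real \<Rightarrow> real \<Rightarrow> real" where
  "sharp_kernel R t = f_ser (R^2*(t^2-1))"

definition flat_kernel :: "real \<Rightarrow> real \<Rightarrow> real" where
  "flat_kernel R t = 1/2 * f_ser (R^2*(t^2-1)) + 2 * R * f_deriv 1 (R^2*(t^2-1))"

definition rescaled_integral ::
    "(real \<Rightarrow> real \<Rightarrow> real) \<Rightarrow> real \<Rightarrow> (real \<Rightarrow> real \<Rightarrow> real) \<Rightarrow> real \<Rightarrow> real" where
  "rescaled_integral k s g R = integral {-1..1} (\<lambda>t. k R t * g R (s + R*t))"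

definition sharp_rescaled :: "real \<Rightarrow> (real \<Rightarrow> real \<Rightarrow> real) \<Rightarrow> real \<Rightarrow> real" where
  "sharp_rescaled s g R = R/2 * exp (R/2) * rescaled_integral sharp_kernel s g R"

definition flat_rescaled :: "real \<Rightarrow> (real \<Rightarrow> real \<Rightarrow> real) \<Rightarrow> real \<Rightarrow> real" where
  "flat_rescaled s g R = exp (R/2) / 2 * (g R (s + R) + g R (s - R))
     - R/2 * exp (R/2) * rescaled_integral flat_kernel s g R"

lemma sharp_pair_eq_sharp_rescaled:
  assumes "continuous_on UNIV \<phi>"
  shows "sharp_pair s R \<phi> = sharp_rescaled s (\<lambda>_. \<phi>) R"
proof -
  define c where "c = 1/2 * sgn R * exp (R/2)"
  have "sharp_pair s R \<phi>
      = integral UNIV (\<lambda>u. if \<bar>u - s\<bar> < \<bar>R\<bar> then (\<lambda>y. c * f_ser y) ((u - s)^2 - R^2) * \<phi> u else 0)"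
    unfolding sharp_pair_def chi_sharp_def c_def by (rule arg_cong[where f = "integral UNIV"]) auto
  also have "\<dots> = \<bar>R\<bar> * c * rescaled_integral sharp_kernel s (\<lambda>_. \<phi>) R"
    by (subst integral_rescaled_interval)
       (auto intro!: continuous_intros assms simp: rescaled_integral_def sharp_kernel_def mult.assoc)
  also have "\<bar>R\<bar> * c = R/2 * exp (R/2)"
    unfolding c_def using abs_mult_sgn[of R] by (simp add: algebra_simps)
  finally show ?thesis by (simp add: sharp_rescaled_def)
qed

lemma flat_pair_eq_flat_rescaled:
  assumes "continuous_on UNIV \<phi>"
  shows "flat_pair s R \<phi> = flat_rescaled s (\<lambda>_. \<phi>) R"
proof -
  define \<kappa> where "\<kappa> y = 1/2 * f_ser y + 2 * R * f_deriv 1 y" for y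
  have "continuous_on UNIV \<kappa>"
    unfolding \<kappa>_def by (intro continuous_intros) auto
  have "integral UNIV (\<lambda>u. if \<bar>u - s\<bar> < \<bar>R\<bar>
            then ((1/2) * f_ser ((u - s)^2 - R^2) + 2 * R * deriv f_ser ((u - s)^2 - R^2)) * \<phi> u
            else 0)
      = integral UNIV (\<lambda>u. if \<bar>u - s\<bar> < \<bar>R\<bar> then \<kappa> ((u - s)^2 - R^2) * \<phi> u else 0)"
    unfolding \<kappa>_def deriv_f_ser ..
  also have "\<dots> = \<bar>R\<bar> * rescaled_integral flat_kernel s (\<lambda>_. \<phi>) R"
    unfolding integral_rescaled_interval[OF \<open>continuous_on UNIV \<kappa>\<close> assms]
    by (simp add: rescaled_integral_def flat_kernel_def \<kappa>_def)
  finally show ?thesis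
    unfolding flat_pair_def flat_rescaled_def by (simp add: sgn_mult_abs mult.assoc[symmetric])
qed

lemma sharp_rescaled_slice: "sharp_rescaled s (\<lambda>_. g R) R = sharp_rescaled s g R"
  by (simp add: sharp_rescaled_def rescaled_integral_def)

lemma flat_rescaled_slice: "flat_rescaled s (\<lambda>_. g R) R = flat_rescaled s g R"
  by (simp add: flat_rescaled_def rescaled_integral_def)

lemma sharp_rescaled_vanish: "(\<And>u. g R u = 0) \<Longrightarrow> sharp_rescaled s g R = 0"
  by (simp add: sharp_rescaled_def rescaled_integral_def)

lemma flat_rescaled_vanish: "(\<And>u. g R u = 0) \<Longrightarrow> flat_rescaled s g R = 0"
  by (simp add: flat_rescaled_def rescaled_integral_def)

lemma rescaled_integral_has_integral:
  assumes "continuous_on UNIV (\<lambda>(R, t). k R t)" "continuous_on UNIV (\<lambda>(R, u). g R u)"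
  shows "((\<lambda>t. k R t * g R (s + R*t)) has_integral rescaled_integral k s g R) {-1..1}"
  unfolding rescaled_integral_def
  by (intro integrable_integral integrable_continuous_real continuous_intros
      continuous_on_compose_uncurry[OF assms(1)] continuous_on_compose_uncurry[OF assms(2)])

lemma has_real_derivative_rescaled_integral:
  assumes g: "partial_C1 g"
    and kd: "\<And>R t. ((\<lambda>r. k r t) has_real_derivative kR R t) (at R)"
    and kc: "continuous_on UNIV (\<lambda>(R, t). k R t)" and kRc: "continuous_on UNIV (\<lambda>(R, t). kR R t)"
  shows "(rescaled_integral k s g has_real_derivative
      rescaled_integral kR s g R + rescaled_integral k s (pR g) R
      + rescaled_integral (\<lambda>R t. t * k R t) s (pu g) R) (at R)"
proof -
  note gc = partial_C1D(3-5)[OF g]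
  have tkc: "continuous_on UNIV (\<lambda>(R, t). t * k R t)"
    using continuous_on_compose_uncurry[OF kc continuous_on_fst continuous_on_snd]
    by (auto intro!: continuous_intros simp: split_beta')
  define F' where "F' r t = kR r t * g r (s + r*t) + k r t * (pR g r (s + r*t) + t * pu g r (s + r*t))"
    for r t
  have dF: "((\<lambda>r. k r t * g r (s + r*t)) has_real_derivative F' r t) (at r)" for r t
  proof -
    have "((\<lambda>r. g r (s + r*t)) has_real_derivative pR g r (s + r*t) + t * pu g r (s + r*t)) (at r)"
      using has_real_derivative_along_line[OF partial_C1D(1,2)[OF g] gc(2), of s t r]
      by (simp add: mult.commute)
    from DERIV_mult[OF kd[where R=r and t=t] this] show ?thesis by (simp add: F'_def mult.commute)
  qed
  have "((\<lambda>r. integral (cbox (-1) 1) (\<lambda>t. k r t * g r (s + r*t))) has_real_derivative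
      integral (cbox (-1) 1) (F' R)) (at R within UNIV)"
  proof (rule leibniz_rule_field_derivative)
    show "((\<lambda>r. k r t * g r (s + r*t)) has_real_derivative F' r t) (at r within UNIV)" for r t
      using dF by simp
    show "(\<lambda>t. k r t * g r (s + r*t)) integrable_on cbox (-1) 1" for r
      by (intro integrable_continuous continuous_intros continuous_on_compose_uncurry[OF kc]
          continuous_on_compose_uncurry[OF gc(1)])
    show "continuous_on (UNIV \<times> cbox (-1) 1) (\<lambda>(r, t). F' r t)"
      unfolding F'_def split_beta'
      by (intro continuous_intros continuous_on_compose_uncurry[OF kc] continuous_on_compose_uncurry[OF kRc]
        continuous_on_compose_uncurry[OF gc(1)] continuous_on_compose_uncurry[OF gc(2)]
        continuous_on_compose_uncurry[OF gc(3)])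
  qed auto
  moreover have "((\<lambda>t. F' R t) has_integral rescaled_integral kR s g R + rescaled_integral k s (pR g) R
      + rescaled_integral (\<lambda>R t. t * k R t) s (pu g) R) {-1..1}"
    using has_integral_add[OF has_integral_add[OF rescaled_integral_has_integral[OF kRc gc(1), of R s]
        rescaled_integral_has_integral[OF kc gc(2), of R s]] rescaled_integral_has_integral[OF tkc gc(3), of R s]]
    by (simp add: F'_def distrib_left add.assoc mult.assoc mult.left_commute)
  ultimately show ?thesis
    unfolding rescaled_integral_def[abs_def] by (simp add: integral_unique cbox_interval)
qed

lemma has_integral_ftc_interval:
  fixes \<Phi> \<Phi>' :: "real \<Rightarrow> real"
  assumes "\<And>t. (\<Phi> has_real_derivative \<Phi>' t) (at t)"
  shows "(\<Phi>' has_integral \<Phi> 1 - \<Phi> (-1)) {-1..1}"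
  by (rule fundamental_theorem_of_calculus)
     (auto intro: has_field_derivative_at_within assms simp flip: has_real_derivative_iff_has_vector_derivative)

text \<open>Integration by parts in \<open>t\<close>: at \<open>t = \<plusminus>1\<close> the kernel is \<open>f(0) = 1\<close>.\<close>
lemma has_integral_ftc_sharp_kernel:
  assumes "\<And>u. (h has_real_derivative h' u) (at u)"
  shows "((\<lambda>t. 2*R^2*t * f_deriv 1 (R^2*(t^2-1)) * h (s + R*t) + R * sharp_kernel R t * h' (s + R*t))
      has_integral h (s + R) - h (s - R)) {-1..1}"
proof -
  have "((\<lambda>t. sharp_kernel R t * h (s + R*t)) has_real_derivative
      2*R^2*t * f_deriv 1 (R^2*(t^2-1)) * h (s + R*t) + R * sharp_kernel R t * h' (s + R*t)) (at t)" for t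
    unfolding sharp_kernel_def
    by (auto intro!: derivative_eq_intros DERIV_chain2[OF assms] simp: algebra_simps power2_eq_square)
  from has_integral_ftc_interval[OF this] show ?thesis
    by (simp add: sharp_kernel_def f_ser_0)
qed

lemma has_integral_ftc_t_sharp_kernel:
  assumes "\<And>u. (h has_real_derivative h' u) (at u)"
  shows "((\<lambda>t. (sharp_kernel R t + 2*R^2*t^2 * f_deriv 1 (R^2*(t^2-1))) * h (s + R*t)
        + R * t * sharp_kernel R t * h' (s + R*t))
      has_integral h (s + R) + h (s - R)) {-1..1}"
proof -
  have "((\<lambda>t. t * sharp_kernel R t * h (s + R*t)) has_real_derivative
      (sharp_kernel R t + 2*R^2*t^2 * f_deriv 1 (R^2*(t^2-1))) * h (s + R*t)
        + R * t * sharp_kernel R t * h' (s + R*t)) (at t)" for t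
    unfolding sharp_kernel_def
    by (auto intro!: derivative_eq_intros DERIV_chain2[OF assms] simp: algebra_simps power2_eq_square)
  from has_integral_ftc_interval[OF this] show ?thesis
    by (simp add: sharp_kernel_def f_ser_0)
qed

definition sharp_kernel_dR :: "real \<Rightarrow> real \<Rightarrow> real" where
  "sharp_kernel_dR R t = 2*R*(t^2-1) * f_deriv 1 (R^2*(t^2-1))"

definition flat_kernel_dR :: "real \<Rightarrow> real \<Rightarrow> real" where
  "flat_kernel_dR R t = R*(t^2-1) * f_deriv 1 (R^2*(t^2-1)) + 2 * f_deriv 1 (R^2*(t^2-1))
     + 4*R^2*(t^2-1) * f_deriv 2 (R^2*(t^2-1))"

lemma kernels_has_real_derivative:
  "((\<lambda>r. sharp_kernel r t) has_real_derivative sharp_kernel_dR R t) (at R)"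
  "((\<lambda>r. flat_kernel r t) has_real_derivative flat_kernel_dR R t) (at R)"
  unfolding sharp_kernel_def sharp_kernel_dR_def flat_kernel_def flat_kernel_dR_def
  by (auto intro!: derivative_eq_intros simp: numeral_2_eq_2 field_simps)

lemma continuous_on_kernels:
  "continuous_on UNIV (\<lambda>(R, t). sharp_kernel R t)" "continuous_on UNIV (\<lambda>(R, t). flat_kernel R t)"
  "continuous_on UNIV (\<lambda>(R, t). sharp_kernel_dR R t)" "continuous_on UNIV (\<lambda>(R, t). flat_kernel_dR R t)"
  "continuous_on UNIV (\<lambda>(R, t). t * sharp_kernel R t)" "continuous_on UNIV (\<lambda>(R, t). t * flat_kernel R t)"
  by (auto simp: split_beta' sharp_kernel_def flat_kernel_def sharp_kernel_dR_def flat_kernel_dR_def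
      intro!: continuous_intros)

lemma sharp_rescaled_has_derivative:
  assumes g: "partial_C1 g"
  shows "(sharp_rescaled s g has_real_derivative
      sharp_rescaled s (pR g) R + flat_rescaled s g R + sharp_rescaled s g R) (at R)"
proof -
  note gc = partial_C1D(3-5)[OF g]
  define e where "e = exp (R/2)"
  let ?W = "\<lambda>k h. rescaled_integral k s h R"
  let ?tk = "\<lambda>r t. t * sharp_kernel r t"
  have "(rescaled_integral sharp_kernel s g has_real_derivative
      ?W sharp_kernel_dR g + ?W sharp_kernel (pR g) + ?W ?tk (pu g)) (at R)"
    by (rule has_real_derivative_rescaled_integral[OF g kernels_has_real_derivative(1) continuous_on_kernels(1,3)])
  then have dA: "(sharp_rescaled s g has_real_derivative (e/2 + R*e/4) * ?W sharp_kernel g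
      + R/2*e * (?W sharp_kernel_dR g + ?W sharp_kernel (pR g) + ?W ?tk (pu g))) (at R)"
    unfolding sharp_rescaled_def[abs_def] e_def by (auto intro!: derivative_eq_intros simp: algebra_simps)
  have "((\<lambda>t. (e/2 - R*e/4) * (sharp_kernel R t * g R (s + R*t))
        + R*e/2 * (sharp_kernel_dR R t * g R (s + R*t))
        + R*e/2 * (?tk R t * pu g R (s + R*t)) + R*e/2 * (flat_kernel R t * g R (s + R*t))
        - e/2 * ((sharp_kernel R t + 2*R^2*t^2 * f_deriv 1 (R^2*(t^2-1))) * g R (s + R*t)
               + R * t * sharp_kernel R t * pu g R (s + R*t)))
      has_integral (e/2 - R*e/4) * ?W sharp_kernel g + R*e/2 * ?W sharp_kernel_dR g
        + R*e/2 * ?W ?tk (pu g) + R*e/2 * ?W flat_kernel g - e/2 * (g R (s + R) + g R (s - R))) {-1..1}"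
    (is "(?F has_integral ?V) _")
    by (intro has_integral_diff has_integral_add has_integral_mult_right rescaled_integral_has_integral
        continuous_on_kernels gc has_integral_ftc_t_sharp_kernel pu_has_real_derivative partial_C1D(2)[OF g])
  moreover have "?F = (\<lambda>t. 0)"
    by (simp add: fun_eq_iff sharp_kernel_dR_def flat_kernel_def sharp_kernel_def algebra_simps power2_eq_square)
  ultimately have "?V = 0"
    using has_integral_unique[OF _ has_integral_0] by simp
  then show ?thesis
    by (intro DERIV_cong[OF dA]) (simp add: sharp_rescaled_def flat_rescaled_def e_def algebra_simps)
qed

lemma has_real_derivative_endpoints:
  assumes g: "partial_C1 g"
  shows "((\<lambda>r. g r (s + r) + g r (s - r)) has_real_derivative
      pR g R (s + R) + pu g R (s + R) + (pR g R (s - R) - pu g R (s - R))) (at R)"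
  using has_real_derivative_along_line[OF partial_C1D(1,2,4)[OF g], of s 1 R]
    has_real_derivative_along_line[OF partial_C1D(1,2,4)[OF g], of s "-1" R]
  by (intro DERIV_add) simp_all

lemma flat_rescaled_has_derivative:
  assumes g: "partial_C1 g" and gu: "partial_C1 (pu g)"
  shows "(flat_rescaled s g has_real_derivative
      flat_rescaled s (pR g) R + sharp_rescaled s (pu (pu g)) R) (at R)"
proof -
  note gc = partial_C1D(3-5)[OF g]
  define e where "e = exp (R/2)"
  define G where "G r = g r (s + r) + g r (s - r)" for r
  let ?W = "\<lambda>k h. rescaled_integral k s h R"
  let ?tk = "\<lambda>r t. t * flat_kernel r t"
  have "(rescaled_integral flat_kernel s g has_real_derivative
      ?W flat_kernel_dR g + ?W flat_kernel (pR g) + ?W ?tk (pu g)) (at R)"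
    by (rule has_real_derivative_rescaled_integral[OF g kernels_has_real_derivative(2) continuous_on_kernels(2,4)])
  moreover note has_real_derivative_endpoints[OF g, of s R, folded G_def]
  moreover have "flat_rescaled s g = (\<lambda>r. exp (r/2) / 2 * G r - r/2 * exp (r/2) * rescaled_integral flat_kernel s g r)"
    by (simp add: fun_eq_iff flat_rescaled_def G_def)
  ultimately have dB: "(flat_rescaled s g has_real_derivative
      e/4 * G R + e/2 * (pR g R (s + R) + pu g R (s + R) + (pR g R (s - R) - pu g R (s - R)))
      - (e/2 + R*e/4) * ?W flat_kernel g - R/2*e * (?W flat_kernel_dR g + ?W flat_kernel (pR g) + ?W ?tk (pu g))) (at R)"
    unfolding e_def by (auto intro!: derivative_eq_intros simp: field_simps)
  have "((\<lambda>t. e/4 * ((sharp_kernel R t + 2*R^2*t^2 * f_deriv 1 (R^2*(t^2-1))) * g R (s + R*t)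
               + R * t * sharp_kernel R t * pu g R (s + R*t))
        + e/2 * (2*R^2*t * f_deriv 1 (R^2*(t^2-1)) * pu g R (s + R*t)
               + R * sharp_kernel R t * pu (pu g) R (s + R*t))
        - (e/2 + R*e/4) * (flat_kernel R t * g R (s + R*t)) - R*e/2 * (flat_kernel_dR R t * g R (s + R*t))
        - R*e/2 * (?tk R t * pu g R (s + R*t)) - R*e/2 * (sharp_kernel R t * pu (pu g) R (s + R*t)))
      has_integral e/4 * (g R (s + R) + g R (s - R)) + e/2 * (pu g R (s + R) - pu g R (s - R))
        - (e/2 + R*e/4) * ?W flat_kernel g - R*e/2 * ?W flat_kernel_dR g - R*e/2 * ?W ?tk (pu g)
        - R*e/2 * ?W sharp_kernel (pu (pu g))) {-1..1}"
    (is "(?F has_integral ?V) _")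
    by (intro has_integral_diff has_integral_add has_integral_mult_right rescaled_integral_has_integral
        continuous_on_kernels gc partial_C1D(5)[OF gu]
        has_integral_ftc_t_sharp_kernel has_integral_ftc_sharp_kernel
        pu_has_real_derivative partial_C1D(2)[OF g] partial_C1D(2)[OF gu])
  moreover have "?F = (\<lambda>t. 0)"
  proof
    fix t
    let ?q = "R^2*(t^2-1)"
    \<comment> \<open>the terms in \<open>g\<^sub>u\<close> and \<open>g\<^sub>u\<^sub>u\<close> cancel; the rest is a multiple of Bessel's equation\<close>
    have "?F t = -2*e*R * (?q * f_deriv 2 ?q + f_deriv 1 ?q + f_ser ?q / 16) * g R (s + R*t)"
      by (simp add: flat_kernel_dR_def flat_kernel_def sharp_kernel_def algebra_simps power2_eq_square)
    then show "?F t = 0" by (simp only: f_ser_ode)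
  qed
  ultimately have "?V = 0"
    using has_integral_unique[OF _ has_integral_0] by simp
  then show ?thesis
    by (intro DERIV_cong[OF dB]) (simp add: sharp_rescaled_def flat_rescaled_def G_def e_def algebra_simps)
qed

section \<open>Test functions on the plane\<close>

lemma partials_trans: "g \<in> partials h \<Longrightarrow> h \<in> partials \<psi> \<Longrightarrow> g \<in> partials \<psi>"
  by (induction rule: partials.induct) (auto intro: partials.intros)

lemma partials_partial_C1: "test2 \<psi> \<Longrightarrow> g \<in> partials \<psi> \<Longrightarrow> partial_C1 g"
  unfolding test2_def partial_C1_def by (blast intro: partials.intros)

lemma partials_continuous: "test2 \<psi> \<Longrightarrow> g \<in> partials \<psi> \<Longrightarrow> continuous_on UNIV (\<lambda>(R, u). g R u)"
  unfolding test2_def by blast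

lemma partials_commute: "test2 \<psi> \<Longrightarrow> g \<in> partials \<psi> \<Longrightarrow> pu (pR g) = pR (pu g)"
  by (intro ext pu_pR_commute) (auto simp: test2_def intro: partials.intros)

lemma deriv_eq_0_outside:
  fixes f :: "real \<Rightarrow> real"
  assumes "\<And>x. K < \<bar>x\<bar> \<Longrightarrow> f x = 0" "K < \<bar>x\<bar>"
  shows "deriv f x = 0"
proof -
  have "open {x::real. K < \<bar>x\<bar>}" by (intro open_Collect_less continuous_intros)
  then have "(f has_real_derivative 0) (at x)"
    using assms by (intro has_field_derivative_transform_within_open[OF DERIV_const]) auto
  then show ?thesis by (rule DERIV_imp_deriv)
qed

lemma partials_vanish_outside:
  assumes "\<And>R u. K < \<bar>R\<bar> \<or> K < \<bar>u\<bar> \<Longrightarrow> \<psi> R u = 0" "g \<in> partials \<psi>" "K < \<bar>R\<bar> \<or> K < \<bar>u\<bar>"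
  shows "g R u = 0"
  using assms(2,3)
proof (induction arbitrary: R u rule: partials.induct)
  case base then show ?case using assms(1) by blast
next
  case (dR g)
  then show ?case
    unfolding pR_def by (cases "K < \<bar>u\<bar>") (auto intro: deriv_eq_0_outside)
next
  case (du g)
  show ?case
  proof (cases "K < \<bar>R\<bar>")
    case True
    then have "(\<lambda>v. g R v) = (\<lambda>v. 0)" using du.IH by auto
    then show ?thesis by (simp add: pu_def)
  next
    case False
    then show ?thesis using du unfolding pu_def by (auto intro: deriv_eq_0_outside)
  qed
qed

lemma test2_vanish_outside:
  assumes "test2 \<psi>"
  obtains K where "\<And>g R u. g \<in> partials \<psi> \<Longrightarrow> K < \<bar>R\<bar> \<or> K < \<bar>u\<bar> \<Longrightarrow> g R u = 0"
proof -
  obtain K where "\<And>R u. K < \<bar>R\<bar> \<or> K < \<bar>u\<bar> \<Longrightarrow> \<psi> R u = 0"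
    using assms unfolding test2_def by blast
  with partials_vanish_outside that show ?thesis by blast
qed

lemma test2_pR: "test2 \<psi> \<Longrightarrow> test2 (pR \<psi>)"
proof -
  assume T: "test2 \<psi>"
  then obtain K where "\<And>g R u. g \<in> partials \<psi> \<Longrightarrow> K < \<bar>R\<bar> \<or> K < \<bar>u\<bar> \<Longrightarrow> g R u = 0"
    using test2_vanish_outside by blast
  moreover have "pR \<psi> \<in> partials \<psi>" by (auto intro: partials.intros)
  ultimately show ?thesis
    using T partials_trans[of _ "pR \<psi>" \<psi>] unfolding test2_def by blast
qed

lemma continuous_on_Lstar:
  assumes T: "test2 \<psi>"
  shows "continuous_on UNIV (\<lambda>(R, u). Lstar \<psi> R u)"
proof -
  have "pR (pR \<psi>) \<in> partials \<psi>" "pu (pu \<psi>) \<in> partials \<psi>" "pR \<psi> \<in> partials \<psi>"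
    by (auto intro: partials.intros)
  note c = this[THEN partials_continuous[OF T]]
  show ?thesis
    unfolding Lstar_def split_beta'
    by (intro continuous_intros continuous_on_compose_uncurry[OF c(1)]
        continuous_on_compose_uncurry[OF c(2)] continuous_on_compose_uncurry[OF c(3)])
qed

lemma Lstar_eq_0:
  assumes "\<And>g. g \<in> partials \<psi> \<Longrightarrow> g R u = 0"
  shows "Lstar \<psi> R u = 0"
  using assms[of "pR (pR \<psi>)"] assms[of "pu (pu \<psi>)"] assms[of "pR \<psi>"]
  by (simp add: Lstar_def partials.intros)

lemma Lstar_bounded:
  assumes T: "test2 \<psi>"
  shows "\<exists>M. \<forall>R u. \<bar>Lstar \<psi> R u\<bar> \<le> M"
proof -
  obtain K where K: "\<And>g R u. g \<in> partials \<psi> \<Longrightarrow> K < \<bar>R\<bar> \<or> K < \<bar>u\<bar> \<Longrightarrow> g R u = 0"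
    using test2_vanish_outside[OF T] by blast
  obtain M where M: "\<And>p. p \<in> cbox (-K, -K) (K, K) \<Longrightarrow> \<bar>Lstar \<psi> (fst p) (snd p)\<bar> \<le> M"
    using compact_continuous_image[OF continuous_on_subset[OF continuous_on_Lstar[OF T]] compact_cbox,
        THEN compact_imp_bounded]
    by (force simp: bounded_iff split_beta')
  have "\<bar>Lstar \<psi> R u\<bar> \<le> \<bar>M\<bar>" for R u
    using M[of "(R, u)"] Lstar_eq_0[of \<psi> R u] K
    by (cases "K < \<bar>R\<bar> \<or> K < \<bar>u\<bar>") (auto simp: cbox_Pair_eq abs_le_iff not_less)
  then show ?thesis by blast
qed

section \<open>The weak equations\<close>

lemma rescaled_integral_Lstar:
  assumes T: "test2 \<psi>" and k: "continuous_on UNIV (\<lambda>(R, t). k R t)"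
  shows "rescaled_integral k s (Lstar \<psi>) R = rescaled_integral k s (pR (pR \<psi>)) R
      - rescaled_integral k s (pu (pu \<psi>)) R + rescaled_integral k s (pR \<psi>) R"
proof -
  have "pR (pR \<psi>) \<in> partials \<psi>" "pu (pu \<psi>) \<in> partials \<psi>" "pR \<psi> \<in> partials \<psi>"
    by (auto intro: partials.intros)
  note I = this[THEN partials_continuous[OF T], THEN rescaled_integral_has_integral[OF k], of R s]
  have "rescaled_integral k s (Lstar \<psi>) R = integral {-1..1} (\<lambda>t. k R t * pR (pR \<psi>) R (s + R*t)
      - k R t * pu (pu \<psi>) R (s + R*t) + k R t * pR \<psi> R (s + R*t))"
    by (simp add: rescaled_integral_def Lstar_def algebra_simps)
  with has_integral_add[OF has_integral_diff[OF I(1,2)] I(3)] show ?thesis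
    by (simp add: integral_unique)
qed

lemma sharp_rescaled_Lstar:
  "test2 \<psi> \<Longrightarrow> sharp_rescaled s (Lstar \<psi>)
    = (\<lambda>R. sharp_rescaled s (pR (pR \<psi>)) R - sharp_rescaled s (pu (pu \<psi>)) R + sharp_rescaled s (pR \<psi>) R)"
  unfolding sharp_rescaled_def fun_eq_iff
  by (simp add: rescaled_integral_Lstar continuous_on_kernels algebra_simps)

lemma flat_rescaled_Lstar:
  assumes "test2 \<psi>"
  shows "flat_rescaled s (Lstar \<psi>)
    = (\<lambda>R. flat_rescaled s (pR (pR \<psi>)) R - flat_rescaled s (pu (pu \<psi>)) R + flat_rescaled s (pR \<psi>) R)"
  unfolding flat_rescaled_def fun_eq_iff rescaled_integral_Lstar[OF assms continuous_on_kernels(2)]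
  by (simp add: Lstar_def algebra_simps)

lemma has_integral_derivative_compact_support:
  fixes H h :: "real \<Rightarrow> real"
  assumes "\<And>R. (H has_real_derivative h R) (at R)" "\<And>R. M < \<bar>R\<bar> \<Longrightarrow> H R = 0 \<and> h R = 0"
  shows "(h has_integral 0) UNIV"
proof -
  define M' where "M' = \<bar>M\<bar> + 1"
  have "(h has_integral (H M' - H (-M'))) {-M'..M'}"
    using assms(1) unfolding M'_def
    by (intro fundamental_theorem_of_calculus)
       (auto intro: has_field_derivative_at_within simp flip: has_real_derivative_iff_has_vector_derivative)
  moreover have "H M' = 0" "H (-M') = 0" using assms(2) by (auto simp: M'_def)
  ultimately have "(h has_integral 0) {-M'..M'}" by simp
  then have "((\<lambda>x. if x \<in> {-M'..M'} then h x else 0) has_integral 0) UNIV"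
    by (simp only: has_integral_restrict_UNIV)
  moreover have "(\<lambda>x. if x \<in> {-M'..M'} then h x else 0) = h"
    using assms(2) by (force simp: fun_eq_iff M'_def abs_le_iff)
  ultimately show ?thesis by simp
qed

lemma integrable_on_compact_support:
  fixes F :: "real \<Rightarrow> real"
  assumes "continuous_on UNIV F" "\<And>R. M < \<bar>R\<bar> \<Longrightarrow> F R = 0"
  shows "F integrable_on UNIV"
proof -
  have "F integrable_on {-M..M}"
    by (intro integrable_continuous_real continuous_on_subset[OF assms(1)]) auto
  then have "(\<lambda>x. if x \<in> {-M..M} then F x else 0) integrable_on UNIV"
    by (simp only: integrable_restrict_UNIV)
  moreover have "(\<lambda>x. if x \<in> {-M..M} then F x else 0) = F"
    using assms(2) by (force simp: fun_eq_iff abs_le_iff)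
  ultimately show ?thesis by simp
qed

text \<open>The weak form of the equation for \<open>\<chi>\<^sup>\<sharp>\<close>: \<open>sharp_rescaled s (Lstar \<psi>)\<close> is the derivative
  of \<open>sharp_rescaled s (pR \<psi>) - flat_rescaled s \<psi>\<close>.\<close>
lemma sharp_rescaled_Lstar_has_integral_0:
  assumes T: "test2 \<psi>"
  shows "(sharp_rescaled s (Lstar \<psi>) has_integral 0) UNIV"
proof -
  obtain K where K: "\<And>g R u. g \<in> partials \<psi> \<Longrightarrow> K < \<bar>R\<bar> \<or> K < \<bar>u\<bar> \<Longrightarrow> g R u = 0"
    using test2_vanish_outside[OF T] by blast
  have m: "\<psi> \<in> partials \<psi>" "pR \<psi> \<in> partials \<psi>" "pu \<psi> \<in> partials \<psi>" "pR (pR \<psi>) \<in> partials \<psi>"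
    "pu (pu \<psi>) \<in> partials \<psi>"
    by (auto intro: partials.intros)
  note C1 = m[THEN partials_partial_C1[OF T]]
  show ?thesis
  proof (rule has_integral_derivative_compact_support[where M = K])
    show "((\<lambda>R. sharp_rescaled s (pR \<psi>) R - flat_rescaled s \<psi> R) has_real_derivative
        sharp_rescaled s (Lstar \<psi>) R) (at R)" for R
      using DERIV_diff[OF sharp_rescaled_has_derivative[OF C1(2), of s R]
          flat_rescaled_has_derivative[OF C1(1,3), of s R]]
      by (simp add: sharp_rescaled_Lstar[OF T] algebra_simps)
    show "sharp_rescaled s (pR \<psi>) R - flat_rescaled s \<psi> R = 0 \<and> sharp_rescaled s (Lstar \<psi>) R = 0"
      if "K < \<bar>R\<bar>" for R
      using that K[OF m(1)] K[OF m(2)] K[OF m(4)] K[OF m(5)]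
      by (simp add: sharp_rescaled_vanish flat_rescaled_vanish sharp_rescaled_Lstar[OF T])
  qed
qed

lemma sharp_rescaled_integrable:
  assumes T: "test2 \<psi>" and g: "g \<in> partials \<psi>"
  shows "sharp_rescaled s g integrable_on UNIV"
proof -
  obtain K where K: "\<And>g R u. g \<in> partials \<psi> \<Longrightarrow> K < \<bar>R\<bar> \<or> K < \<bar>u\<bar> \<Longrightarrow> g R u = 0"
    using test2_vanish_outside[OF T] by blast
  have "isCont (sharp_rescaled s g) R" for R
    using DERIV_isCont[OF sharp_rescaled_has_derivative[OF partials_partial_C1[OF T g], of s R]] .
  then have "continuous_on UNIV (sharp_rescaled s g)"
    by (simp add: continuous_at_imp_continuous_on)
  then show ?thesis
    by (rule integrable_on_compact_support[where M = K]) (use K[OF g] in \<open>auto intro: sharp_rescaled_vanish\<close>)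
qed

lemma flat_rescaled_has_integral:
  assumes T: "test2 \<psi>" and g: "g \<in> partials \<psi>"
  shows "(flat_rescaled s g has_integral
      - integral UNIV (sharp_rescaled s (pR g)) - integral UNIV (sharp_rescaled s g)) UNIV"
proof -
  obtain K where K: "\<And>g R u. g \<in> partials \<psi> \<Longrightarrow> K < \<bar>R\<bar> \<or> K < \<bar>u\<bar> \<Longrightarrow> g R u = 0"
    using test2_vanish_outside[OF T] by blast
  have gR: "pR g \<in> partials \<psi>" using g by (rule partials.dR)
  have "((\<lambda>R. sharp_rescaled s (pR g) R + flat_rescaled s g R + sharp_rescaled s g R) has_integral 0) UNIV"
    by (rule has_integral_derivative_compact_support[where M = K,
          OF sharp_rescaled_has_derivative[OF partials_partial_C1[OF T g]]])
       (use K[OF g] K[OF gR] in \<open>simp add: sharp_rescaled_vanish flat_rescaled_vanish\<close>)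
  from has_integral_diff[OF has_integral_diff[OF this sharp_rescaled_integrable[OF T gR, of s, THEN integrable_integral]]
      sharp_rescaled_integrable[OF T g, of s, THEN integrable_integral]]
  show ?thesis by simp
qed

text \<open>By \<open>flat_rescaled_has_integral\<close>, the weak form of the equation for \<open>\<chi>\<^sup>\<flat>\<close> is the
  sum of those for \<open>\<chi>\<^sup>\<sharp>\<close> tested against \<open>\<psi>\<close> and against \<open>\<psi>\<^sub>R\<close>, once the mixed
  partial derivatives of \<open>\<psi>\<close> are known to commute.\<close>
lemma flat_rescaled_Lstar_has_integral_0:
  assumes T: "test2 \<psi>"
  shows "(flat_rescaled s (Lstar \<psi>) has_integral 0) UNIV"
proof -
  define c where "c g = integral UNIV (sharp_rescaled s g)" for g
  have c_Lstar: "c (pR (pR \<phi>)) - c (pu (pu \<phi>)) + c (pR \<phi>) = 0" if T': "test2 \<phi>" for \<phi>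
  proof -
    have "pR (pR \<phi>) \<in> partials \<phi>" "pu (pu \<phi>) \<in> partials \<phi>" "pR \<phi> \<in> partials \<phi>"
      by (auto intro: partials.intros)
    note I = this[THEN sharp_rescaled_integrable[OF T'], THEN integrable_integral, of s]
    from has_integral_add[OF has_integral_diff[OF I(1,2)] I(3)]
    have "(sharp_rescaled s (Lstar \<phi>) has_integral c (pR (pR \<phi>)) - c (pu (pu \<phi>)) + c (pR \<phi>)) UNIV"
      by (simp add: c_def sharp_rescaled_Lstar[OF T'])
    with sharp_rescaled_Lstar_has_integral_0[OF T'] show ?thesis
      by (rule has_integral_unique[symmetric])
  qed
  have "pu (pu (pR \<psi>)) = pR (pu (pu \<psi>))"
    using partials_commute[OF T, of \<psi>] partials_commute[OF T, of "pu \<psi>"] by (simp add: partials.intros)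
  then have "c (pR (pR (pR \<psi>))) - c (pR (pu (pu \<psi>))) + c (pR (pR \<psi>)) = 0"
    using c_Lstar[OF test2_pR[OF T]] by simp
  moreover have "pR (pR \<psi>) \<in> partials \<psi>" "pu (pu \<psi>) \<in> partials \<psi>" "pR \<psi> \<in> partials \<psi>"
    by (auto intro: partials.intros)
  note I = this[THEN flat_rescaled_has_integral[OF T], of s]
  from has_integral_add[OF has_integral_diff[OF I(1,2)] I(3)]
  have "(flat_rescaled s (Lstar \<psi>) has_integral
      - (c (pR (pR (pR \<psi>))) - c (pR (pu (pu \<psi>))) + c (pR (pR \<psi>)))
      - (c (pR (pR \<psi>)) - c (pu (pu \<psi>)) + c (pR \<psi>))) UNIV"
    by (simp add: c_def flat_rescaled_Lstar[OF T] algebra_simps)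
  ultimately show ?thesis using c_Lstar[OF T] by simp
qed

lemma flat_pair_Lstar_has_integral_0:
  assumes "test2 \<psi>"
  shows "((\<lambda>R. flat_pair s R (Lstar \<psi> R)) has_integral 0) UNIV"
proof -
  have "flat_pair s R (Lstar \<psi> R) = flat_rescaled s (Lstar \<psi>) R" for R
    using flat_pair_eq_flat_rescaled[OF continuous_on_compose_uncurry[OF continuous_on_Lstar[OF assms]
        continuous_on_const continuous_on_id]]
    by (simp add: flat_rescaled_slice)
  with flat_rescaled_Lstar_has_integral_0[OF assms] show ?thesis by simp
qed

section \<open>Integration over the plane\<close>

lemma integrable_lborel_bounded_support:
  fixes F :: "'a::euclidean_space \<Rightarrow> real"
  assumes "F \<in> borel_measurable lborel" "\<And>x. \<bar>F x\<bar> \<le> C" "\<And>x. x \<notin> cbox a b \<Longrightarrow> F x = 0"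
  shows "integrable lborel F"
proof (rule Bochner_Integration.integrable_bound[where f = "\<lambda>x. C * indicator (cbox a b) x"])
  show "integrable lborel (\<lambda>x. C * indicator (cbox a b) x :: real)"
    by (intro integrable_mult_right integrable_real_indicator emeasure_lborel_cbox_finite) auto
  show "AE x in lborel. norm (F x) \<le> norm (C * indicator (cbox a b) x :: real)"
    using assms(2,3) by (intro AE_I2) (auto simp: indicator_def intro: order_trans[OF assms(2) abs_ge_self])
qed (use assms(1) in simp)

lemma has_integral_prod_compact_support:
  fixes F :: "real \<times> real \<Rightarrow> real"
  assumes F: "F \<in> borel_measurable borel" and bnd: "\<And>p. \<bar>F p\<bar> \<le> C"
    and supp: "\<And>R u. K < \<bar>R\<bar> \<or> K < \<bar>u\<bar> \<Longrightarrow> F (R, u) = 0"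
    and inner: "\<And>R. integral UNIV (\<lambda>u. F (R, u)) = G R" and G: "(G has_integral I) UNIV"
  shows "(F has_integral I) UNIV"
proof -
  have "F p = 0" if "p \<notin> cbox (-K, -K) (K, K)" for p
  proof -
    have "K < \<bar>fst p\<bar> \<or> K < \<bar>snd p\<bar>" using that by (cases p) (auto simp: cbox_Pair_eq abs_le_iff)
    then show ?thesis using supp[of "fst p" "snd p"] by simp
  qed
  with F bnd have Fint: "integrable lborel F"
    by (intro integrable_lborel_bounded_support) auto
  then have Fint2: "integrable (lborel \<Otimes>\<^sub>M lborel) F" by (simp add: lborel_prod)
  have "integrable lborel (\<lambda>u. F (R, u))" for R
  proof (rule integrable_lborel_bounded_support[where a = "-K" and b = K])
    show "F (R, u) = 0" if "u \<notin> cbox (-K) K" for u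
      using that supp[of R u] by (cases "0 \<le> u") auto
  qed (use F bnd in \<open>auto simp: measurable_Pair2' borel_prod[symmetric]\<close>)
  then have inner_L: "(\<integral>u. F (R, u) \<partial>lborel) = G R" for R
    using integral_lborel inner by metis
  have "integrable lborel G"
    using lborel_pair.integrable_fst'[OF Fint2] by (simp add: inner_L)
  then have "(\<integral>R. G R \<partial>lborel) = I"
    using integral_lborel G by (metis integral_unique)
  moreover have "integral\<^sup>L lborel F = (\<integral>R. G R \<partial>lborel)"
    using lborel_pair.integral_fst'[OF Fint2] by (simp add: lborel_prod inner_L)
  ultimately show ?thesis using has_integral_integral_lborel[OF Fint] by simp
qed

lemma abs_chi_sharp_le: "\<bar>chi_sharp R v\<bar> \<le> 1/2 * exp (R/2) * f_ser (-(R^2))"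
proof (cases "\<bar>v\<bar> < \<bar>R\<bar>")
  case True
  then have "v^2 < R^2" using power_strict_mono[OF True abs_ge_zero, of 2] by simp
  then have "0 \<le> f_ser (v^2 - R^2)" "f_ser (v^2 - R^2) \<le> f_ser (-(R^2))"
    using f_ser_nonpos_bounds[of "-(R^2)" "v^2 - R^2"] by auto
  then show ?thesis using True by (simp add: chi_sharp_def abs_mult)
next
  case False
  then show ?thesis using f_ser_nonpos_bounds(1)[of "-(R^2)" "-(R^2)"] by (simp add: chi_sharp_def)
qed

lemma abs_chi_sharp_le_uniform:
  assumes "\<bar>R\<bar> \<le> K"
  shows "\<bar>chi_sharp R v\<bar> \<le> 1/2 * exp (K/2) * f_ser (-(K^2))"
proof -
  have "R^2 \<le> K^2" using assms by (simp add: abs_le_square_iff[symmetric])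
  then have "f_ser (-(R^2)) \<le> f_ser (-(K^2))" "0 \<le> f_ser (-(R^2))"
    using f_ser_nonpos_bounds[of "-(K^2)" "-(R^2)"] by auto
  moreover have "exp (R/2) \<le> exp (K/2)" using assms by simp
  ultimately show ?thesis
    using abs_chi_sharp_le[of R v] mult_mono[of "exp (R/2)" "exp (K/2)"] by fastforce
qed

lemma chi_sharp_Lstar_has_integral_0:
  assumes T: "test2 \<psi>"
  shows "((\<lambda>(R, u). chi_sharp R (u - s) * Lstar \<psi> R u) has_integral 0) UNIV"
proof -
  obtain K where K: "\<And>g R u. g \<in> partials \<psi> \<Longrightarrow> K < \<bar>R\<bar> \<or> K < \<bar>u\<bar> \<Longrightarrow> g R u = 0"
    using test2_vanish_outside[OF T] by blast
  have Lz: "Lstar \<psi> R u = 0" if "K < \<bar>R\<bar> \<or> K < \<bar>u\<bar>" for R u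
    using K that by (intro Lstar_eq_0)
  obtain M where "\<And>R u. \<bar>Lstar \<psi> R u\<bar> \<le> M" using Lstar_bounded[OF T] by blast
  moreover from this[of 0 0] have "0 \<le> M" by simp
  ultimately have M: "0 \<le> M" "\<And>R u. \<bar>Lstar \<psi> R u\<bar> \<le> M" by blast+
  note Lc = continuous_on_Lstar[OF T]
  have [measurable]: "(\<lambda>p. Lstar \<psi> (fst p) (snd p)) \<in> borel_measurable (borel \<Otimes>\<^sub>M borel)"
    unfolding borel_prod using Lc by (intro borel_measurable_continuous_onI) (simp add: split_beta')
  show ?thesis
  proof (rule has_integral_prod_compact_support[where K = K and C = "1/2 * exp (K/2) * f_ser (-(K^2)) * M"])
    show "(\<lambda>(R, u). chi_sharp R (u - s) * Lstar \<psi> R u) \<in> borel_measurable borel"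
      unfolding borel_prod[symmetric] split_beta' chi_sharp_def by measurable
    show "\<bar>(\<lambda>(R, u). chi_sharp R (u - s) * Lstar \<psi> R u) p\<bar> \<le> 1/2 * exp (K/2) * f_ser (-(K^2)) * M" for p
    proof (cases "K < \<bar>fst p\<bar>")
      case False
      then have "\<bar>chi_sharp (fst p) (snd p - s)\<bar> \<le> 1/2 * exp (K/2) * f_ser (-(K^2))"
        by (intro abs_chi_sharp_le_uniform) simp
      from mult_mono[OF this M(2) order_trans[OF abs_ge_zero this] abs_ge_zero]
      show ?thesis by (simp add: split_beta' abs_mult)
    next
      case True
      have "0 \<le> f_ser (-(K^2))" using f_ser_nonpos_bounds(1)[of "-(K^2)" "-(K^2)"] by simp
      with True Lz M(1) show ?thesis by (simp add: split_beta')
    qed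
    show "integral UNIV (\<lambda>u. (\<lambda>(R, u). chi_sharp R (u - s) * Lstar \<psi> R u) (R, u))
        = sharp_rescaled s (Lstar \<psi>) R" for R
    proof -
      have "continuous_on UNIV (Lstar \<psi> R)"
        by (intro continuous_on_compose_uncurry[OF Lc] continuous_intros)
      then show ?thesis
        using sharp_pair_eq_sharp_rescaled[of "Lstar \<psi> R" s R]
        by (simp add: sharp_pair_def sharp_rescaled_slice)
    qed
    show "(\<lambda>(R, u). chi_sharp R (u - s) * Lstar \<psi> R u) (R, u) = 0" if "K < \<bar>R\<bar> \<or> K < \<bar>u\<bar>" for R u
      using Lz[OF that] by simp
  qed (rule sharp_rescaled_Lstar_has_integral_0[OF T])
qed

section \<open>Initial values and decay\<close>

lemma test1_differentiable: "test1 \<phi> \<Longrightarrow> ((deriv ^^ n) \<phi>) differentiable (at x)"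
  unfolding test1_def by blast

lemma test1_continuous: "test1 \<phi> \<Longrightarrow> continuous_on UNIV \<phi>"
  using test1_differentiable[of \<phi> 0]
  by (auto intro: continuous_at_imp_continuous_on differentiable_imp_continuous_within)

lemma test1_deriv: "test1 \<phi> \<Longrightarrow> test1 (deriv \<phi>)"
proof -
  assume T: "test1 \<phi>"
  then obtain K where K: "\<And>x. K < \<bar>x\<bar> \<Longrightarrow> \<phi> x = 0" unfolding test1_def by blast
  then have "deriv \<phi> x = 0" if "K < \<bar>x\<bar>" for x
    using that by (rule deriv_eq_0_outside)
  moreover have "((deriv ^^ n) (deriv \<phi>)) differentiable (at x)" for n x
    using test1_differentiable[OF T, of "Suc n"] by (simp add: funpow_Suc_right del: funpow.simps)
  ultimately show ?thesis unfolding test1_def by blast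
qed

lemma partial_C1_const:
  assumes "test1 h"
  shows "partial_C1 (\<lambda>_. h)"
proof -
  have "continuous_on UNIV (\<lambda>(R::real, u). f u)" if "continuous_on UNIV f" for f :: "real \<Rightarrow> real"
    using continuous_on_compose2[OF that continuous_on_snd[OF continuous_on_id]] by (simp add: split_beta')
  then show ?thesis
    using test1_differentiable[OF assms, of 0] test1_continuous[OF test1_deriv[OF assms]]
      test1_continuous[OF assms]
    unfolding partial_C1_def pR_const pu_const by auto
qed

lemma sharp_pair_has_derivative:
  assumes "test1 \<phi>"
  shows "((\<lambda>r. sharp_pair s r \<phi>) has_real_derivative flat_pair s R \<phi> + sharp_pair s R \<phi>) (at R)"
  using sharp_rescaled_has_derivative[OF partial_C1_const[OF assms], of s R]
  by (simp add: sharp_pair_eq_sharp_rescaled flat_pair_eq_flat_rescaled test1_continuous[OF assms]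
      pR_const sharp_rescaled_vanish)

lemma flat_pair_has_derivative:
  assumes "test1 \<phi>"
  shows "((\<lambda>r. flat_pair s r \<phi>) has_real_derivative sharp_pair s R (deriv (deriv \<phi>))) (at R)"
  using flat_rescaled_has_derivative[OF partial_C1_const[OF assms], of s R]
    partial_C1_const[OF test1_deriv[OF assms]]
  by (simp add: sharp_pair_eq_sharp_rescaled flat_pair_eq_flat_rescaled test1_continuous
      test1_deriv assms pR_const pu_const flat_rescaled_vanish)

lemma sharp_pair_at_0: "sharp_pair s 0 \<phi> = 0"
  by (simp add: sharp_pair_def chi_sharp_def)

lemma flat_pair_at_0: "flat_pair s 0 \<phi> = \<phi> s"
  by (simp add: flat_pair_def)

lemma tendsto_at_of_has_real_derivative:
  "(\<And>x. (F has_real_derivative F' x) (at x)) \<Longrightarrow> F a = L \<Longrightarrow> (F \<longlongrightarrow> L) (at a)"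
  using DERIV_isCont isCont_def by blast

lemma pairings_tendsto_at_0:
  assumes T: "test1 \<phi>"
  shows "((\<lambda>R. sharp_pair s R \<phi>) \<longlongrightarrow> 0) (at 0)"
    and "((\<lambda>R. deriv (\<lambda>r. sharp_pair s r \<phi>) R) \<longlongrightarrow> \<phi> s) (at 0)"
    and "((\<lambda>R. flat_pair s R \<phi>) \<longlongrightarrow> \<phi> s) (at 0)"
    and "((\<lambda>R. deriv (\<lambda>r. flat_pair s r \<phi>) R) \<longlongrightarrow> 0) (at 0)"
proof -
  note dsharp = sharp_pair_has_derivative[OF T] and dflat = flat_pair_has_derivative[OF T]
  note dsharp'' = sharp_pair_has_derivative[OF test1_deriv[OF test1_deriv[OF T]]]
  show sharp: "((\<lambda>R. sharp_pair s R \<phi>) \<longlongrightarrow> 0) (at 0)"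
    by (rule tendsto_at_of_has_real_derivative[OF dsharp sharp_pair_at_0])
  show flat: "((\<lambda>R. flat_pair s R \<phi>) \<longlongrightarrow> \<phi> s) (at 0)"
    by (rule tendsto_at_of_has_real_derivative[OF dflat flat_pair_at_0])
  show "((\<lambda>R. deriv (\<lambda>r. sharp_pair s r \<phi>) R) \<longlongrightarrow> \<phi> s) (at 0)"
    using tendsto_add[OF flat sharp] by (simp add: DERIV_imp_deriv[OF dsharp])
  show "((\<lambda>R. deriv (\<lambda>r. flat_pair s r \<phi>) R) \<longlongrightarrow> 0) (at 0)"
    using tendsto_at_of_has_real_derivative[OF dsharp'' sharp_pair_at_0]
    by (simp add: DERIV_imp_deriv[OF dflat])
qed

lemma abs_integral_le_compact_support:
  fixes h :: "real \<Rightarrow> real"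
  assumes "h integrable_on UNIV" "\<And>u. K < \<bar>u\<bar> \<Longrightarrow> h u = 0" "\<And>u. \<bar>h u\<bar> \<le> C" "0 \<le> K"
  shows "\<bar>integral UNIV h\<bar> \<le> 2 * K * C"
proof -
  have "(\<lambda>u. if u \<in> {-K..K} then h u else 0) = h"
    using assms(2) by (force simp: fun_eq_iff abs_le_iff)
  then have "integral UNIV h = integral {-K..K} h"
    using integral_restrict_UNIV[of "{-K..K}" h] by simp
  moreover have "h integrable_on {-K..K}"
    using assms(1) by (rule integrable_on_subinterval) auto
  moreover have "0 \<le> C" using order_trans[OF abs_ge_zero assms(3)] .
  ultimately show ?thesis
    using has_integral_bound_real[of C "{}" h "integral {-K..K} h" "-K" K] assms(3,4)
    by (simp add: integrable_integral algebra_simps)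
qed

lemma compact_support_bound:
  fixes \<phi> :: "real \<Rightarrow> real"
  assumes "continuous_on UNIV \<phi>" "\<And>u. K0 < \<bar>u\<bar> \<Longrightarrow> \<phi> u = 0"
  obtains K M where "0 \<le> K" "\<And>u. K < \<bar>u\<bar> \<Longrightarrow> \<phi> u = 0" "\<And>u. \<bar>\<phi> u\<bar> \<le> M"
proof -
  define K where "K = \<bar>K0\<bar>"
  obtain M where M: "\<And>u. u \<in> {-K..K} \<Longrightarrow> \<bar>\<phi> u\<bar> \<le> M"
    using compact_continuous_image[OF continuous_on_subset[OF assms(1)] compact_Icc, THEN compact_imp_bounded]
    by (force simp: bounded_iff)
  have "\<bar>\<phi> u\<bar> \<le> M" for u
    using M[of u] M[of 0] assms(2)[of u] by (cases "K < \<bar>u\<bar>") (auto simp: K_def abs_le_iff not_less)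
  with assms(2) show ?thesis by (intro that[of K M]) (auto simp: K_def)
qed

lemma abs_sharp_pair_le:
  assumes \<phi>: "continuous_on UNIV \<phi>" and K: "\<And>u. K < \<bar>u\<bar> \<Longrightarrow> \<phi> u = 0" "0 \<le> K"
    and M: "\<And>u. \<bar>\<phi> u\<bar> \<le> M"
  shows "\<bar>sharp_pair s R \<phi>\<bar> \<le> K * M * (exp (R/2) * f_ser (-(R^2)))"
proof (cases "R = 0")
  case False
  have "continuous_on UNIV (\<lambda>u. 1/2 * sgn R * exp (R/2) * f_ser ((u - s)^2 - R^2) * \<phi> u)"
    by (intro continuous_intros \<phi>)
  from has_integral_integrable[OF has_integral_rescaled_interval[OF this False, of s]]
  have "(\<lambda>u. chi_sharp R (u - s) * \<phi> u) integrable_on UNIV"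
    by (rule integrable_eq) (simp add: chi_sharp_def)
  moreover have "\<bar>chi_sharp R (u - s) * \<phi> u\<bar> \<le> 1/2 * exp (R/2) * f_ser (-(R^2)) * M" for u
    unfolding abs_mult using abs_chi_sharp_le M f_ser_nonpos_bounds(1)[of "-(R^2)" "-(R^2)"]
    by (intro mult_mono) auto
  ultimately show ?thesis
    unfolding sharp_pair_def using abs_integral_le_compact_support[OF _ _ _ K(2)] K(1)
    by (fastforce simp: algebra_simps)
qed (use M[of 0] K(2) in \<open>simp add: sharp_pair_def chi_sharp_def f_ser_0\<close>)

lemma abs_flat_kernel_le:
  assumes "\<bar>v\<bar> < \<bar>R\<bar>"
  shows "\<bar>1/2 * f_ser (v^2 - R^2) + 2 * R * f_deriv 1 (v^2 - R^2)\<bar>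
      \<le> f_ser (-(R^2)) / 2 + 2 * (\<bar>R\<bar> * \<bar>f_deriv 1 (-(R^2))\<bar>)"
proof -
  have "v^2 < R^2" using power_strict_mono[OF assms abs_ge_zero, of 2] by simp
  then have b: "0 \<le> f_ser (v^2 - R^2)" "f_ser (v^2 - R^2) \<le> f_ser (-(R^2))"
      "\<bar>f_deriv 1 (v^2 - R^2)\<bar> \<le> \<bar>f_deriv 1 (-(R^2))\<bar>"
    using f_ser_nonpos_bounds[of "-(R^2)" "v^2 - R^2"] by auto
  have "\<bar>1/2 * f_ser (v^2 - R^2) + 2 * R * f_deriv 1 (v^2 - R^2)\<bar>
      \<le> \<bar>f_ser (v^2 - R^2)\<bar> / 2 + 2 * (\<bar>R\<bar> * \<bar>f_deriv 1 (v^2 - R^2)\<bar>)"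
    by (rule order_trans[OF abs_triangle_ineq]) (simp add: abs_mult)
  also have "\<dots> \<le> f_ser (-(R^2)) / 2 + 2 * (\<bar>R\<bar> * \<bar>f_deriv 1 (-(R^2))\<bar>)"
    using b by (intro add_mono mult_left_mono) auto
  finally show ?thesis .
qed

lemma abs_flat_pair_le:
  assumes \<phi>: "continuous_on UNIV \<phi>" and K: "\<And>u. K < \<bar>u\<bar> \<Longrightarrow> \<phi> u = 0" "0 \<le> K"
    and M: "\<And>u. \<bar>\<phi> u\<bar> \<le> M" and ends: "\<phi> (s + R) = 0" "\<phi> (s - R) = 0"
  shows "\<bar>flat_pair s R \<phi>\<bar>
    \<le> K * M * (exp (R/2) * f_ser (-(R^2)) / 2 + 2 * (exp (R/2) * (\<bar>R\<bar> * \<bar>f_deriv 1 (-(R^2))\<bar>)))"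
proof -
  define \<kappa> where "\<kappa> y = 1/2 * f_ser y + 2 * R * f_deriv 1 y" for y
  define h where "h u = (if \<bar>u - s\<bar> < \<bar>R\<bar> then \<kappa> ((u - s)^2 - R^2) * \<phi> u else 0)" for u
  define C where "C = (f_ser (-(R^2)) / 2 + 2 * (\<bar>R\<bar> * \<bar>f_deriv 1 (-(R^2))\<bar>)) * M"
  have "h integrable_on UNIV"
  proof (cases "R = 0")
    case False
    have "continuous_on UNIV (\<lambda>u. \<kappa> ((u - s)^2 - R^2) * \<phi> u)"
      unfolding \<kappa>_def by (intro continuous_intros \<phi>)
    from has_integral_integrable[OF has_integral_rescaled_interval[OF this False, of s]] show ?thesis
      by (simp add: h_def[abs_def])
  qed (simp add: h_def[abs_def] integrable_0)
  moreover have "\<bar>h u\<bar> \<le> C" for u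
  proof (cases "\<bar>u - s\<bar> < \<bar>R\<bar>")
    case True
    then have "\<bar>\<kappa> ((u - s)^2 - R^2)\<bar> \<le> f_ser (-(R^2)) / 2 + 2 * (\<bar>R\<bar> * \<bar>f_deriv 1 (-(R^2))\<bar>)"
      unfolding \<kappa>_def by (rule abs_flat_kernel_le)
    then show ?thesis
      using True M[of u] by (auto simp: h_def C_def abs_mult intro!: mult_mono order_trans[OF abs_ge_zero])
  next
    case False
    have "0 \<le> C" using M[of 0] f_ser_nonpos_bounds(1)[of "-(R^2)" "-(R^2)"]
      by (auto simp: C_def intro: order_trans[OF abs_ge_zero])
    with False show ?thesis by (simp add: h_def)
  qed
  ultimately have I: "\<bar>integral UNIV h\<bar> \<le> 2 * K * C"
    using abs_integral_le_compact_support K by (fastforce simp: h_def)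
  have "flat_pair s R \<phi> = - (1/2) * sgn R * exp (R/2) * integral UNIV h"
    unfolding flat_pair_def h_def \<kappa>_def deriv_f_ser ends by simp
  then have "\<bar>flat_pair s R \<phi>\<bar> \<le> exp (R/2) / 2 * \<bar>integral UNIV h\<bar>"
    by (simp add: abs_mult abs_sgn_eq)
  also have "\<dots> \<le> exp (R/2) / 2 * (2 * K * C)"
    using I by (intro mult_left_mono) auto
  finally show ?thesis by (simp add: C_def algebra_simps)
qed

lemma pairings_tendsto_0_at_bot:
  assumes T: "test1 \<phi>"
  shows "((\<lambda>R. sharp_pair s R \<phi>) \<longlongrightarrow> 0) at_bot"
    and "((\<lambda>R. flat_pair s R \<phi>) \<longlongrightarrow> 0) at_bot"
proof -
  note c = test1_continuous[OF T]
  obtain K0 where "\<And>u. K0 < \<bar>u\<bar> \<Longrightarrow> \<phi> u = 0" using T unfolding test1_def by blast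
  then obtain K M
    where K: "0 \<le> K" "\<And>u. K < \<bar>u\<bar> \<Longrightarrow> \<phi> u = 0" and M: "\<And>u. \<bar>\<phi> u\<bar> \<le> M"
    by (rule compact_support_bound[OF c]) blast+
  show "((\<lambda>R. sharp_pair s R \<phi>) \<longlongrightarrow> 0) at_bot"
  proof (rule Lim_null_comparison)
    show "\<forall>\<^sub>F R in at_bot. norm (sharp_pair s R \<phi>) \<le> K * M * (exp (R/2) * f_ser (-(R^2)))"
      using abs_sharp_pair_le[OF c K(2,1) M] by simp
    show "((\<lambda>R. K * M * (exp (R/2) * f_ser (-(R^2)))) \<longlongrightarrow> 0) at_bot"
      by (rule tendsto_mult_right_zero[OF exp_half_f_ser_tendsto_0_at_bot])
  qed
  have "\<forall>\<^sub>F R in at_bot. norm (flat_pair s R \<phi>)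
      \<le> K * M * (exp (R/2) * f_ser (-(R^2)) / 2 + 2 * (exp (R/2) * (\<bar>R\<bar> * \<bar>f_deriv 1 (-(R^2))\<bar>)))"
    using eventually_le_at_bot[of "-(K + \<bar>s\<bar>) - 1"]
  proof eventually_elim
    case (elim R)
    then have "K < \<bar>s + R\<bar>" "K < \<bar>s - R\<bar>" using K(1) by arith+
    then show ?case unfolding real_norm_def by (intro abs_flat_pair_le[OF c K(2,1) M] K(2))
  qed
  moreover have "((\<lambda>R. K * M * (exp (R/2) * f_ser (-(R^2)) / 2
      + 2 * (exp (R/2) * (\<bar>R\<bar> * \<bar>f_deriv 1 (-(R^2))\<bar>)))) \<longlongrightarrow> 0) at_bot"
    by (intro tendsto_mult_right_zero tendsto_add_zero tendsto_divide_zero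
        exp_half_f_ser_tendsto_0_at_bot exp_half_f_deriv_1_tendsto_0_at_bot)
  ultimately show "((\<lambda>R. flat_pair s R \<phi>) \<longlongrightarrow> 0) at_bot"
    by (rule Lim_null_comparison)
qed

theorem theorem2p2:
  fixes s :: real
  shows
    \<comment> \<open>chi-sharp solves the equation in distributions on R^2\<close>
    "(\<forall>\<psi>. test2 \<psi> \<longrightarrow>
        ((\<lambda>(R, u). chi_sharp R (u - s) * Lstar \<psi> R u) has_integral 0) (UNIV :: (real \<times> real) set))
   \<and> (\<forall>\<psi>. test2 \<psi> \<longrightarrow>
        ((\<lambda>R. flat_pair s R (\<lambda>u. Lstar \<psi> R u)) has_integral 0) (UNIV :: real set))
   \<and> (\<forall>\<phi>. test1 \<phi> \<longrightarrow>
        ((\<lambda>R. sharp_pair s R \<phi>) \<longlongrightarrow> 0) (at 0)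
      \<and> ((\<lambda>R. deriv (\<lambda>r. sharp_pair s r \<phi>) R) \<longlongrightarrow> \<phi> s) (at 0)
      \<and> ((\<lambda>R. flat_pair s R \<phi>) \<longlongrightarrow> \<phi> s) (at 0)
      \<and> ((\<lambda>R. deriv (\<lambda>r. flat_pair s r \<phi>) R) \<longlongrightarrow> 0) (at 0)
      \<and> ((\<lambda>R. sharp_pair s R \<phi>) \<longlongrightarrow> 0) at_bot
      \<and> ((\<lambda>R. flat_pair s R \<phi>) \<longlongrightarrow> 0) at_bot
      \<and> (\<forall>R. ((\<lambda>r. sharp_pair s r \<phi>) has_real_derivative
                  (flat_pair s R \<phi> + sharp_pair s R \<phi>)) (at R)))"
  using chi_sharp_Lstar_has_integral_0 flat_pair_Lstar_has_integral_0 pairings_tendsto_at_0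
    pairings_tendsto_0_at_bot sharp_pair_has_derivative
  by blast

end
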